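(* Let $P$ be a tree poset of height $k$, let $q\geq k$ and $\ell$ be positive integers and $\varepsilon>0$. Then there exists $\gamma=\gamma(\varepsilon,q,\ell)>0$ such that, for $n$ sufficiently large, the following holds for every $v\in P$ and every poset homomorphism $\mathrm{r}:P\to[q]$. Let $\mathcal{F}\subseteq\widetilde{\mathcal{B}}_n$ be an $\ell$-gapped family with $\mu(\mathcal{F})\geq q-1+\varepsilon$, and let $\Gamma$ be a $(\frac{\gamma}{2},\ell,\mathcal{F})$-bounded family. Then there is $F\in\mathcal{F}$ such that the number of injective induced homomorphisms $\varphi:P\to\mathcal{F}$ with $\varphi(P)\notin\Gamma$ and $\varphi(v)=F$ is at least $$\left(\frac{\gamma}{2}\right)^{|P|-1}\prod_{xy\in H(P)}n^{\ell|\mathrm{r}(y)-\mathrm{r}(x)|}.$$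
   Context: $\widetilde{\mathcal{B}}_n=\{F\subseteq[n]: |\,|F|-n/2\,|<2\sqrt{n\ln n}\}$. A tree poset is a finite poset whose Hasse diagram is a tree; height is the largest number of elements in a chain; $|P|$ is the number of elements. $H(P)$ is the directed Hasse diagram: an edge $xy$ from $x$ to $y$ when $x<_P y$ and no $z$ satisfies $x<_P z<_P y$. Here $[q]$ carries the reverse of the natural order, so a poset homomorphism $\mathrm{r}:P\to[q]$ means $x<_P y\Rightarrow \mathrm{r}(x)>\mathrm{r}(y)$. An injective induced homomorphism $\varphi:P\to\mathcal{F}$ is an injective map with $\varphi(x)\subsetneq\varphi(y)$ iff $x<_P y$; $\varphi(P)$ is its image. $\mu(\mathcal{F})=\sum_{F\in\mathcal{F}}1/\binom{n}{|F|}$. $\mathcal{F}$ is $\ell$-gapped if $|G\setminus F|\ge\ell$ whenever $F,G\in\mathcal{F}$ and $F\subsetneq G$. For an $\ell$-gapped $\mathcal{F}$, a collection $\Gamma\subseteq2^{\mathcal{F}}$ is $(\gamma,\ell,\mathcal{F})$-bounded if (1) $\{F\}\notin\Gamma$ for every $F\in\mathcal{F}$, and (2) for every $\mathcal{D}\notin\Gamma$, the number of $F\in\mathcal{F}$ with $\{F\}\cup\mathcal{D}\in\Gamma$ is less than $\gamma n^{\ell}$. *)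

theory Defs
  imports Complex_Main "HOL-Library.FuncSet"
begin

definition strict_poset :: "nat set \<Rightarrow> (nat \<Rightarrow> nat \<Rightarrow> bool) \<Rightarrow> bool" where
  "strict_poset V lt \<longleftrightarrow> finite V \<and>
     (\<forall>x\<in>V. \<not> lt x x) \<and>
     (\<forall>x\<in>V. \<forall>y\<in>V. \<forall>z\<in>V. lt x y \<and> lt y z \<longrightarrow> lt x z)"

definition hasse_edge :: "nat set \<Rightarrow> (nat \<Rightarrow> nat \<Rightarrow> bool) \<Rightarrow> nat \<Rightarrow> nat \<Rightarrow> bool" where
  "hasse_edge V lt x y \<longleftrightarrow> x \<in> V \<and> y \<in> V \<and> lt x y \<and> \<not> (\<exists>z\<in>V. lt x z \<and> lt z y)"

definition hasse_diagram :: "nat set \<Rightarrow> (nat \<Rightarrow> nat \<Rightarrow> bool) \<Rightarrow> (nat \<times> nat) set" where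
  "hasse_diagram V lt = {(x, y). hasse_edge V lt x y}"

definition hasse_adj :: "nat set \<Rightarrow> (nat \<Rightarrow> nat \<Rightarrow> bool) \<Rightarrow> nat \<Rightarrow> nat \<Rightarrow> bool" where
  "hasse_adj V lt x y \<longleftrightarrow> hasse_edge V lt x y \<or> hasse_edge V lt y x"

definition graph_connected :: "nat set \<Rightarrow> (nat \<Rightarrow> nat \<Rightarrow> bool) \<Rightarrow> bool" where
  "graph_connected V adj \<longleftrightarrow>
     (\<forall>x\<in>V. \<forall>y\<in>V. (\<lambda>a b. a \<in> V \<and> b \<in> V \<and> adj a b)\<^sup>*\<^sup>* x y)"

definition graph_has_cycle :: "nat set \<Rightarrow> (nat \<Rightarrow> nat \<Rightarrow> bool) \<Rightarrow> bool" where
  "graph_has_cycle V adj \<longleftrightarrow>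
     (\<exists>cs. length cs \<ge> 3 \<and> distinct cs \<and> set cs \<subseteq> V \<and>
        (\<forall>i < length cs - 1. adj (cs ! i) (cs ! Suc i)) \<and> adj (last cs) (hd cs))"

definition tree_poset :: "nat set \<Rightarrow> (nat \<Rightarrow> nat \<Rightarrow> bool) \<Rightarrow> bool" where
  "tree_poset V lt \<longleftrightarrow> strict_poset V lt \<and> V \<noteq> {} \<and>
     graph_connected V (hasse_adj V lt) \<and> \<not> graph_has_cycle V (hasse_adj V lt)"

definition is_chain :: "nat set \<Rightarrow> (nat \<Rightarrow> nat \<Rightarrow> bool) \<Rightarrow> nat set \<Rightarrow> bool" where
  "is_chain V lt C \<longleftrightarrow> C \<subseteq> V \<and> (\<forall>x\<in>C. \<forall>y\<in>C. x = y \<or> lt x y \<or> lt y x)"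

definition poset_height :: "nat set \<Rightarrow> (nat \<Rightarrow> nat \<Rightarrow> bool) \<Rightarrow> nat" where
  "poset_height V lt = Max {card C | C. is_chain V lt C}"

text \<open>Homomorphism into [q] = {1..q} carrying the reverse of the natural order.\<close>
definition rev_hom :: "nat set \<Rightarrow> (nat \<Rightarrow> nat \<Rightarrow> bool) \<Rightarrow> nat \<Rightarrow> (nat \<Rightarrow> nat) \<Rightarrow> bool" where
  "rev_hom V lt q r \<longleftrightarrow> (\<forall>x\<in>V. r x \<in> {1..q}) \<and>
     (\<forall>x\<in>V. \<forall>y\<in>V. lt x y \<longrightarrow> r x > r y)"

definition middle_layers :: "nat \<Rightarrow> nat set set" where
  "middle_layers n = {F. F \<subseteq> {1..n} \<and>
      \<bar>real (card F) - real n / 2\<bar> < 2 * sqrt (real n * ln (real n))}"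

definition lubell_mass :: "nat \<Rightarrow> nat set set \<Rightarrow> real" where
  "lubell_mass n \<F> = (\<Sum>F\<in>\<F>. 1 / real (n choose card F))"

definition gapped :: "nat \<Rightarrow> nat set set \<Rightarrow> bool" where
  "gapped l \<F> \<longleftrightarrow> (\<forall>F\<in>\<F>. \<forall>G\<in>\<F>. F \<subset> G \<longrightarrow> card (G - F) \<ge> l)"

definition bounded_collection :: "nat \<Rightarrow> real \<Rightarrow> nat \<Rightarrow> nat set set \<Rightarrow> nat set set set \<Rightarrow> bool" where
  "bounded_collection n \<gamma> l \<F> \<Gamma> \<longleftrightarrow> \<Gamma> \<subseteq> Pow \<F> \<and>
     (\<forall>F\<in>\<F>. {F} \<notin> \<Gamma>) \<and>
     (\<forall>D. D \<subseteq> \<F> \<and> D \<notin> \<Gamma> \<longrightarrow>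
        real (card {F\<in>\<F>. insert F D \<in> \<Gamma>}) < \<gamma> * real n ^ l)"

definition inj_induced_homs :: "nat set \<Rightarrow> (nat \<Rightarrow> nat \<Rightarrow> bool) \<Rightarrow> nat set set \<Rightarrow> (nat \<Rightarrow> nat set) set" where
  "inj_induced_homs V lt \<F> = {\<phi> \<in> V \<rightarrow>\<^sub>E \<F>. inj_on \<phi> V \<and>
     (\<forall>x\<in>V. \<forall>y\<in>V. \<phi> x \<subset> \<phi> y \<longleftrightarrow> lt x y)}"

end

theory Submission
  imports Defs "HOL-Combinatorics.Multiset_Permutations" "HOL-Combinatorics.Transposition"
begin

section \<open>Permutations with prescribed prefixes\<close>

lemma nth_in_set_take_iff:
  assumes "distinct xs" "p < length xs"
  shows "xs ! p \<in> set (take k xs) \<longleftrightarrow> p < k"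
proof
  assume "xs ! p \<in> set (take k xs)"
  then obtain p' where "p' < min k (length xs)" "xs ! p' = xs ! p"
    by (auto simp: in_set_conv_nth)
  then show "p < k" using assms nth_eq_iff_index_eq by fastforce
qed (use assms in \<open>auto simp: in_set_conv_nth intro: exI[of _ p]\<close>)

lemma permutation_length:
  "\<sigma> \<in> permutations_of_set {1..n} \<Longrightarrow> length \<sigma> = n"
  using length_finite_permutations_of_set by fastforce

lemma card_set_take_permutation:
  assumes "\<sigma> \<in> permutations_of_set {1..n}" "k \<le> n"
  shows "card (set (take k \<sigma>)) = k"
  using assms permutation_length[OF assms(1)]
  by (simp add: permutations_of_set_def distinct_card)

lemma card_permutations_split:
  assumes fin: "finite A" and FA: "F \<subseteq> A" and k: "card F = k"
  shows "card {\<sigma> \<in> permutations_of_set A. set (take k \<sigma>) = F \<and> P (take k \<sigma>) \<and> Q (drop k \<sigma>)}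
       = card {\<alpha> \<in> permutations_of_set F. P \<alpha>} * card {\<beta> \<in> permutations_of_set (A - F). Q \<beta>}"
proof -
  define X where "X = {\<alpha> \<in> permutations_of_set F. P \<alpha>}"
  define Y where "Y = {\<beta> \<in> permutations_of_set (A - F). Q \<beta>}"
  have lenX: "length \<alpha> = k" if "\<alpha> \<in> X" for \<alpha>
    using that k by (auto simp: X_def length_finite_permutations_of_set)
  have "{\<sigma> \<in> permutations_of_set A. set (take k \<sigma>) = F \<and> P (take k \<sigma>) \<and> Q (drop k \<sigma>)}
       = (\<lambda>(\<alpha>, \<beta>). \<alpha> @ \<beta>) ` (X \<times> Y)"
  proof (intro equalityI subsetI)
    fix \<sigma>
    assume "\<sigma> \<in> {\<sigma> \<in> permutations_of_set A. set (take k \<sigma>) = F \<and> P (take k \<sigma>) \<and> Q (drop k \<sigma>)}"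
    then have \<sigma>: "set \<sigma> = A" "distinct \<sigma>" "set (take k \<sigma>) = F" "P (take k \<sigma>)" "Q (drop k \<sigma>)"
      by (auto simp: permutations_of_set_def)
    have "set (take k \<sigma>) \<inter> set (drop k \<sigma>) = {}" "set (take k \<sigma>) \<union> set (drop k \<sigma>) = A"
      using \<sigma>(1,2) by (metis append_take_drop_id distinct_append, metis append_take_drop_id set_append)
    then have "set (drop k \<sigma>) = A - F" using \<sigma>(3) by blast
    then have "take k \<sigma> \<in> X" "drop k \<sigma> \<in> Y"
      using \<sigma> by (auto simp: X_def Y_def permutations_of_set_def)
    then show "\<sigma> \<in> (\<lambda>(\<alpha>, \<beta>). \<alpha> @ \<beta>) ` (X \<times> Y)"
      by (intro image_eqI[of _ _ "(take k \<sigma>, drop k \<sigma>)"]) auto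
  next
    fix \<sigma> assume "\<sigma> \<in> (\<lambda>(\<alpha>, \<beta>). \<alpha> @ \<beta>) ` (X \<times> Y)"
    then obtain \<alpha> \<beta> where \<sigma>: "\<sigma> = \<alpha> @ \<beta>" "\<alpha> \<in> X" "\<beta> \<in> Y" by auto
    then show "\<sigma> \<in> {\<sigma> \<in> permutations_of_set A. set (take k \<sigma>) = F \<and> P (take k \<sigma>) \<and> Q (drop k \<sigma>)}"
      using lenX[OF \<sigma>(2)] FA by (auto simp: X_def Y_def permutations_of_set_def)
  qed
  moreover have "inj_on (\<lambda>(\<alpha>, \<beta>). \<alpha> @ \<beta>) (X \<times> Y)"
    by (rule inj_onI) (use lenX in auto)
  ultimately show ?thesis
    by (simp add: card_image card_cartesian_product X_def Y_def)
qed

lemma card_permutations_nth_eq: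
  assumes fin: "finite B" and b: "b \<in> B" and p: "p < card B"
  shows "card {\<beta> \<in> permutations_of_set B. \<beta> ! p = b} = fact (card B - 1)"
proof -
  define C where "C = (\<lambda>b. {\<beta> \<in> permutations_of_set B. \<beta> ! p = b})"
  have len: "length \<beta> = card B" if "\<beta> \<in> permutations_of_set B" for \<beta>
    using that by (rule length_finite_permutations_of_set)
  \<comment> \<open>the transposition of b1 and b2 maps C b1 injectively into C b2\<close>
  have card_le: "card (C b1) \<le> card (C b2)" if "b1 \<in> B" "b2 \<in> B" for b1 b2
  proof -
    have "map (Transposition.transpose b1 b2) ` C b1 \<subseteq> C b2"
      using that p len by (auto simp: C_def permutations_of_set_def distinct_map)
    moreover have "inj_on (map (Transposition.transpose b1 b2)) (C b1)"
      by (rule inj_on_mapI) simp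
    moreover have "finite (C b2)" by (simp add: C_def)
    ultimately show ?thesis by (metis card_image card_mono)
  qed
  have "permutations_of_set B = (\<Union>b'\<in>B. C b')"
  proof (intro equalityI subsetI)
    fix \<beta> assume "\<beta> \<in> permutations_of_set B"
    moreover from this have "\<beta> ! p \<in> B"
      using p len nth_mem by (fastforce simp: permutations_of_set_def)
    ultimately show "\<beta> \<in> (\<Union>b'\<in>B. C b')" by (auto simp: C_def)
  qed (auto simp: C_def)
  then have "fact (card B) = card (\<Union>b'\<in>B. C b')"
    using fin by (metis card_permutations_of_set)
  also have "\<dots> = (\<Sum>b'\<in>B. card (C b'))"
    by (rule card_UN_disjoint) (use fin in \<open>auto simp: C_def\<close>)
  also have "\<dots> = (\<Sum>b'\<in>B. card (C b))"
    using card_le b by (intro sum.cong refl antisym) auto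
  finally have "card B * fact (card B - 1) = card B * card (C b)"
    using p by (cases "card B") auto
  then show ?thesis using p by (simp add: C_def)
qed

lemma card_permutations_prefix:
  assumes "finite A" "F \<subseteq> A" "card F = k"
  shows "card {\<sigma> \<in> permutations_of_set A. set (take k \<sigma>) = F} = fact k * fact (card A - k)"
  using card_permutations_split[OF assms, of "\<lambda>_. True" "\<lambda>_. True"] assms
  by (simp add: card_Diff_subset finite_subset)

lemma card_permutations_two_prefixes:
  assumes fin: "finite A" and FG: "F \<subseteq> G" and GA: "G \<subseteq> A" and k: "card F = k" and m: "card G = m"
  shows "card {\<sigma> \<in> permutations_of_set A. set (take k \<sigma>) = F \<and> set (take m \<sigma>) = G}
       = fact k * fact (m - k) * fact (card A - m)"
proof -
  have finG: "finite G" using fin GA finite_subset by blast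
  have km: "k \<le> m" using k m FG finG card_mono by blast
  have "{\<sigma> \<in> permutations_of_set A. set (take k \<sigma>) = F \<and> set (take m \<sigma>) = G}
     = {\<sigma> \<in> permutations_of_set A. set (take k \<sigma>) = F \<and> True \<and> set (take (m - k) (drop k \<sigma>)) = G - F}"
  proof (intro Collect_cong conj_cong refl)
    fix \<sigma> assume "\<sigma> \<in> permutations_of_set A" and "set (take k \<sigma>) = F"
    moreover have "take m \<sigma> = take k \<sigma> @ take (m - k) (drop k \<sigma>)"
      using km by (metis le_add_diff_inverse take_add)
    moreover have "set (take (m - k) (drop k \<sigma>)) \<subseteq> set (drop k \<sigma>)"
      by (rule set_take_subset)
    moreover have "set (take k \<sigma>) \<inter> set (drop k \<sigma>) = {}"
      using \<open>\<sigma> \<in> permutations_of_set A\<close>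
      by (simp add: permutations_of_set_def set_take_disj_set_drop_if_distinct)
    ultimately show "(set (take m \<sigma>) = G) = (True \<and> set (take (m - k) (drop k \<sigma>)) = G - F)"
      using FG by auto
  qed
  also have "card \<dots> = fact k * card {\<beta> \<in> permutations_of_set (A - F). set (take (m - k) \<beta>) = G - F}"
    using card_permutations_split[OF fin _ k, of "\<lambda>_. True" "\<lambda>\<beta>. set (take (m - k) \<beta>) = G - F"]
      FG GA k fin by (simp add: finite_subset)
  also have "\<dots> = fact k * (fact (m - k) * fact (card (A - F) - (m - k)))"
  proof -
    have "G - F \<subseteq> A - F" "card (G - F) = m - k"
      using FG GA k m finG by (auto simp: card_Diff_subset finite_subset)
    then show ?thesis using card_permutations_prefix[of "A - F" "G - F" "m - k"] fin by simp
  qed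
  also have "card (A - F) - (m - k) = card A - m"
    using k FG GA fin km m card_mono[OF fin GA] by (simp add: card_Diff_subset finite_subset)
  finally show ?thesis by (simp add: mult.assoc)
qed

lemma card_permutations_prefix_nth_after:
  assumes fin: "finite A" and FA: "F \<subseteq> A" and k: "card F = k" and b: "b \<in> A - F"
    and p: "k \<le> p" "p < card A"
  shows "card {\<sigma> \<in> permutations_of_set A. set (take k \<sigma>) = F \<and> \<sigma> ! p = b}
       = fact k * fact (card A - k - 1)"
proof -
  have cAF: "card (A - F) = card A - k" using k FA fin by (simp add: card_Diff_subset finite_subset)
  have "{\<sigma> \<in> permutations_of_set A. set (take k \<sigma>) = F \<and> \<sigma> ! p = b}
     = {\<sigma> \<in> permutations_of_set A. set (take k \<sigma>) = F \<and> True \<and> (drop k \<sigma>) ! (p - k) = b}"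
    using p by (auto simp: length_finite_permutations_of_set)
  also have "card \<dots> = fact k * fact (card (A - F) - 1)"
    using card_permutations_split[OF fin FA k, of "\<lambda>_. True" "\<lambda>\<beta>. \<beta> ! (p - k) = b"]
      card_permutations_nth_eq[of "A - F" b "p - k"]
      fin FA k b p cAF
    by (simp add: finite_subset)
  finally show ?thesis using cAF by simp
qed

lemma card_permutations_prefix_nth_before:
  assumes fin: "finite A" and FA: "F \<subseteq> A" and k: "card F = k" and b: "b \<in> F" and p: "p < k"
  shows "card {\<sigma> \<in> permutations_of_set A. set (take k \<sigma>) = F \<and> \<sigma> ! p = b}
       = fact (k - 1) * fact (card A - k)"
proof -
  have "{\<sigma> \<in> permutations_of_set A. set (take k \<sigma>) = F \<and> \<sigma> ! p = b}
     = {\<sigma> \<in> permutations_of_set A. set (take k \<sigma>) = F \<and> (take k \<sigma>) ! p = b \<and> True}"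
    using p by auto
  also have "card \<dots> = fact (card F - 1) * fact (card (A - F))"
    using card_permutations_split[OF fin FA k, of "\<lambda>\<alpha>. \<alpha> ! p = b" "\<lambda>_. True"]
      card_permutations_nth_eq[of F b p]
      fin FA k b p
    by (simp add: finite_subset)
  finally show ?thesis using k FA fin by (simp add: card_Diff_subset finite_subset)
qed


text \<open>Permutations whose maximal chain starts with F at level k and, shortly above or below
  level k, passes a set comparable with a fixed set H. These are the ``bad'' permutations of
  the extension step; there are few because H must be hit at one of at most T positions.\<close>

lemma prefix_comparable_above_cases:
  assumes \<sigma>: "\<sigma> \<in> permutations_of_set {1..n}" and k: "k < n"
    and b: "b \<in> H - set (take k \<sigma>)" and g: "g \<in> {k<..k+T}"
    and cmp: "set (take g \<sigma>) \<subseteq> H \<or> H \<subseteq> set (take g \<sigma>)"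
  shows "set (take k \<sigma>) \<subseteq> H \<and> \<sigma> ! k \<in> H - set (take k \<sigma>) \<or> (\<exists>p\<in>{k..<k+T}. \<sigma> ! p = b)"
  using cmp
proof
  have \<sigma>': "distinct \<sigma>" "length \<sigma> = n"
    using \<sigma> permutation_length by (auto simp: permutations_of_set_def)
  assume gH: "set (take g \<sigma>) \<subseteq> H"
  have "set (take k \<sigma>) \<subseteq> set (take g \<sigma>)"
    using g by (simp add: set_take_subset_set_take)
  moreover have "\<sigma> ! k \<in> set (take g \<sigma>)" "\<sigma> ! k \<notin> set (take k \<sigma>)"
    using nth_in_set_take_iff[OF \<sigma>'(1), of k] k g \<sigma>'(2) by auto
  ultimately show ?thesis using gH by blast
next
  have \<sigma>': "distinct \<sigma>" "length \<sigma> = n"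
    using \<sigma> permutation_length by (auto simp: permutations_of_set_def)
  assume "H \<subseteq> set (take g \<sigma>)"
  moreover from this obtain p where p: "p < length \<sigma>" "\<sigma> ! p = b"
    using b by (metis DiffD1 in_set_conv_nth in_set_takeD subsetD)
  ultimately have "p < g" "\<not> p < k"
    using nth_in_set_take_iff[OF \<sigma>'(1) p(1)] b by auto
  then show ?thesis using p(2) g by auto
qed

lemma prefix_comparable_below_cases:
  assumes \<sigma>: "\<sigma> \<in> permutations_of_set {1..n}" and k: "0 < k" "k \<le> n"
    and b: "b \<in> set (take k \<sigma>) - H" and g: "g \<in> {k-T..<k}"
    and cmp: "set (take g \<sigma>) \<subseteq> H \<or> H \<subseteq> set (take g \<sigma>)"
  shows "H \<subseteq> set (take k \<sigma>) \<and> \<sigma> ! (k - 1) \<in> set (take k \<sigma>) - H \<or> (\<exists>p\<in>{k-T..<k}. \<sigma> ! p = b)"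
  using cmp
proof
  have \<sigma>': "distinct \<sigma>" "length \<sigma> = n"
    using \<sigma> permutation_length by (auto simp: permutations_of_set_def)
  assume Hg: "H \<subseteq> set (take g \<sigma>)"
  have "set (take g \<sigma>) \<subseteq> set (take k \<sigma>)"
    using g by (simp add: set_take_subset_set_take)
  moreover have "\<sigma> ! (k - 1) \<in> set (take k \<sigma>)" "\<sigma> ! (k - 1) \<notin> set (take g \<sigma>)"
    using nth_in_set_take_iff[OF \<sigma>'(1), of "k - 1"] k g \<sigma>'(2) by auto
  ultimately show ?thesis using Hg by blast
next
  have \<sigma>': "distinct \<sigma>" "length \<sigma> = n"
    using \<sigma> permutation_length by (auto simp: permutations_of_set_def)
  assume "set (take g \<sigma>) \<subseteq> H"
  moreover obtain p where p: "p < length \<sigma>" "\<sigma> ! p = b"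
    using b by (metis DiffD1 in_set_conv_nth in_set_takeD)
  ultimately have "p < k" "\<not> p < g"
    using nth_in_set_take_iff[OF \<sigma>'(1) p(1)] b by auto
  then show ?thesis using p(2) g by auto
qed

lemma card_prefix_comparable_above:
  assumes F: "F \<subseteq> {1..n}" "card F = k" and T: "0 < T" "k + T \<le> n"
    and H: "H \<subseteq> {1..n}" "\<not> H \<subseteq> F" and HT: "F \<subseteq> H \<Longrightarrow> card H \<le> k + T"
  shows "card {\<sigma> \<in> permutations_of_set {1..n}. set (take k \<sigma>) = F \<and>
             (\<exists>g\<in>{k<..k+T}. set (take g \<sigma>) \<subseteq> H \<or> H \<subseteq> set (take g \<sigma>))}
         \<le> 2 * T * (fact k * fact (n - k - 1))"
proof -
  define PS where "PS = permutations_of_set {1..n}"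
  define c :: nat where "c = fact k * fact (n - k - 1)"
  obtain b where b: "b \<in> H - F" using H(2) by blast
  define E1 where "E1 = (if F \<subseteq> H then (\<Union>b'\<in>H - F. {\<sigma>\<in>PS. set (take k \<sigma>) = F \<and> \<sigma> ! k = b'}) else {})"
  define E2 where "E2 = (\<lambda>p. {\<sigma>\<in>PS. set (take k \<sigma>) = F \<and> \<sigma> ! p = b})"
  have "{\<sigma> \<in> PS. set (take k \<sigma>) = F \<and> (\<exists>g\<in>{k<..k+T}. set (take g \<sigma>) \<subseteq> H \<or> H \<subseteq> set (take g \<sigma>))}
        \<subseteq> E1 \<union> (\<Union>p\<in>{k..<k+T}. E2 p)"
  proof
    fix \<sigma> assume "\<sigma> \<in> {\<sigma> \<in> PS. set (take k \<sigma>) = F \<and>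
      (\<exists>g\<in>{k<..k+T}. set (take g \<sigma>) \<subseteq> H \<or> H \<subseteq> set (take g \<sigma>))}"
    then obtain g where \<sigma>: "\<sigma> \<in> PS" "set (take k \<sigma>) = F" and g: "g \<in> {k<..k+T}"
      and cmp: "set (take g \<sigma>) \<subseteq> H \<or> H \<subseteq> set (take g \<sigma>)"
      by blast
    then have "F \<subseteq> H \<and> \<sigma> ! k \<in> H - F \<or> (\<exists>p\<in>{k..<k+T}. \<sigma> ! p = b)"
      using prefix_comparable_above_cases[of \<sigma> n k b H g T] b T by (simp add: PS_def)
    then show "\<sigma> \<in> E1 \<union> (\<Union>p\<in>{k..<k+T}. E2 p)"
      using \<sigma> by (auto simp: E1_def E2_def)
  qed
  moreover have "card E1 \<le> T * c"
  proof (cases "F \<subseteq> H")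
    case True
    have "card E1 \<le> (\<Sum>b'\<in>H - F. card {\<sigma>\<in>PS. set (take k \<sigma>) = F \<and> \<sigma> ! k = b'})"
      unfolding E1_def using True H(1) by (simp add: card_UN_le finite_subset)
    also have "\<dots> = card (H - F) * c"
      using card_permutations_prefix_nth_after[of "{1..n}" F k _ k] F H(1) T
      by (simp add: PS_def c_def subset_iff)
    also have "card (H - F) \<le> T"
      using HT True F H(1) by (simp add: card_Diff_subset finite_subset)
    finally show ?thesis by simp
  qed (simp add: E1_def)
  moreover have "card (E2 p) = c" if "p \<in> {k..<k+T}" for p
    using card_permutations_prefix_nth_after[of "{1..n}" F k b p] F H(1) T b that
    by (auto simp: E2_def PS_def c_def)
  then have "card (\<Union>p\<in>{k..<k+T}. E2 p) \<le> T * c"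
    using card_UN_le[of "{k..<k+T}" E2] by simp
  moreover have "finite E1"
    by (rule finite_subset[of E1 PS]) (auto simp: E1_def PS_def)
  moreover have "finite (\<Union>p\<in>{k..<k+T}. E2 p)"
    by (simp add: E2_def PS_def)
  ultimately show ?thesis
    unfolding PS_def[symmetric] c_def[symmetric]
    by (smt (verit) card_Un_le card_mono finite_UnI le_trans mult_2 add_mono distrib_right)
qed

lemma card_prefix_comparable_below:
  assumes F: "F \<subseteq> {1..n}" "card F = k" and T: "0 < T" "T \<le> k"
    and H: "H \<subseteq> {1..n}" "\<not> F \<subseteq> H" and HT: "H \<subseteq> F \<Longrightarrow> k \<le> card H + T"
  shows "card {\<sigma> \<in> permutations_of_set {1..n}. set (take k \<sigma>) = F \<and>
             (\<exists>g\<in>{k-T..<k}. set (take g \<sigma>) \<subseteq> H \<or> H \<subseteq> set (take g \<sigma>))}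
         \<le> 2 * T * (fact (k - 1) * fact (n - k))"
proof -
  define PS where "PS = permutations_of_set {1..n}"
  define c :: nat where "c = fact (k - 1) * fact (n - k)"
  obtain b where b: "b \<in> F - H" using H(2) by blast
  define E1 where "E1 = (if H \<subseteq> F then (\<Union>b'\<in>F - H. {\<sigma>\<in>PS. set (take k \<sigma>) = F \<and> \<sigma> ! (k - 1) = b'}) else {})"
  define E2 where "E2 = (\<lambda>p. {\<sigma>\<in>PS. set (take k \<sigma>) = F \<and> \<sigma> ! p = b})"
  have kn: "k \<le> n" using F card_mono[OF _ F(1)] by fastforce
  have "{\<sigma> \<in> PS. set (take k \<sigma>) = F \<and> (\<exists>g\<in>{k-T..<k}. set (take g \<sigma>) \<subseteq> H \<or> H \<subseteq> set (take g \<sigma>))}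
        \<subseteq> E1 \<union> (\<Union>p\<in>{k-T..<k}. E2 p)"
  proof
    fix \<sigma> assume "\<sigma> \<in> {\<sigma> \<in> PS. set (take k \<sigma>) = F \<and>
      (\<exists>g\<in>{k-T..<k}. set (take g \<sigma>) \<subseteq> H \<or> H \<subseteq> set (take g \<sigma>))}"
    then obtain g where \<sigma>: "\<sigma> \<in> PS" "set (take k \<sigma>) = F" and g: "g \<in> {k-T..<k}"
      and cmp: "set (take g \<sigma>) \<subseteq> H \<or> H \<subseteq> set (take g \<sigma>)"
      by blast
    then have "H \<subseteq> F \<and> \<sigma> ! (k - 1) \<in> F - H \<or> (\<exists>p\<in>{k-T..<k}. \<sigma> ! p = b)"
      using prefix_comparable_below_cases[of \<sigma> n k b H g T] b T kn by (simp add: PS_def)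
    then show "\<sigma> \<in> E1 \<union> (\<Union>p\<in>{k-T..<k}. E2 p)"
      using \<sigma> by (auto simp: E1_def E2_def)
  qed
  moreover have "card E1 \<le> T * c"
  proof (cases "H \<subseteq> F")
    case True
    have "card E1 \<le> (\<Sum>b'\<in>F - H. card {\<sigma>\<in>PS. set (take k \<sigma>) = F \<and> \<sigma> ! (k - 1) = b'})"
      unfolding E1_def using True F(1) by (simp add: card_UN_le finite_subset)
    also have "\<dots> = card (F - H) * c"
      using card_permutations_prefix_nth_before[of "{1..n}" F k _ "k - 1"] F T
      by (simp add: PS_def c_def)
    also have "card (F - H) \<le> T"
      using HT True F by (simp add: card_Diff_subset finite_subset)
    finally show ?thesis by simp
  qed (simp add: E1_def)
  moreover have "card (E2 p) = c" if "p \<in> {k-T..<k}" for p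
    using card_permutations_prefix_nth_before[of "{1..n}" F k b p] F b that
    by (auto simp: E2_def PS_def c_def)
  then have "card (\<Union>p\<in>{k-T..<k}. E2 p) \<le> T * c"
    using card_UN_le[of "{k-T..<k}" E2] T by simp
  moreover have "finite E1"
    by (rule finite_subset[of E1 PS]) (auto simp: E1_def PS_def)
  moreover have "finite (\<Union>p\<in>{k-T..<k}. E2 p)"
    by (simp add: E2_def PS_def)
  ultimately show ?thesis
    unfolding PS_def[symmetric] c_def[symmetric]
    by (smt (verit) card_Un_le card_mono finite_UnI le_trans mult_2 add_mono distrib_right)
qed

lemma binomial_le_binomial_inner:
  assumes "a \<le> t" "t + a \<le> N"
  shows "N choose a \<le> N choose t"
proof (cases "2 * t \<le> N")
  case True
  then show ?thesis using assms binomial_mono by blast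
next
  case False
  then have "N choose a \<le> N choose (N - t)"
    using assms by (intro binomial_mono) auto
  also have "\<dots> = N choose t"
    using assms by (intro binomial_symmetric[symmetric]) auto
  finally show ?thesis .
qed

lemma fact_mult_binomial_le:
  assumes "a \<le> t" "t + a \<le> N"
  shows "fact t * fact (N - t) * (N choose a) \<le> (fact N :: nat)"
proof -
  have "fact t * fact (N - t) * (N choose a) \<le> fact t * fact (N - t) * (N choose t)"
    using binomial_le_binomial_inner[OF assms] by simp
  also have "\<dots> = fact N"
    using assms by (intro binomial_fact_lemma) simp
  finally show ?thesis .
qed

lemma card_two_prefixes_above_le:
  assumes "F \<subseteq> G" "G \<subseteq> {1..n}" "card F = k" "card G = g" "k + a \<le> g" "g + a \<le> n"
  shows "card {\<sigma> \<in> permutations_of_set {1..n}. set (take k \<sigma>) = F \<and> set (take g \<sigma>) = G}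
           * ((n - k) choose a) \<le> fact k * fact (n - k)"
proof -
  have "fact (g - k) * fact (n - k - (g - k)) * ((n - k) choose a) \<le> fact (n - k)"
    using assms by (intro fact_mult_binomial_le) auto
  moreover have "n - k - (g - k) = n - g" using assms by simp
  ultimately show ?thesis
    using card_permutations_two_prefixes[of "{1..n}" F G k g] assms
    by (simp add: mult.assoc)
qed

lemma card_two_prefixes_below_le:
  assumes "G \<subseteq> F" "F \<subseteq> {1..n}" "card F = k" "card G = g" "g + a \<le> k" "a \<le> g"
  shows "card {\<sigma> \<in> permutations_of_set {1..n}. set (take k \<sigma>) = F \<and> set (take g \<sigma>) = G}
           * (k choose a) \<le> fact k * fact (n - k)"
proof -
  have "fact (k - g) * fact (k - (k - g)) * (k choose a) \<le> fact k"
    using assms by (intro fact_mult_binomial_le) auto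
  moreover have "k - (k - g) = g" using assms by simp
  moreover have "{\<sigma> \<in> permutations_of_set {1..n}. set (take k \<sigma>) = F \<and> set (take g \<sigma>) = G}
      = {\<sigma> \<in> permutations_of_set {1..n}. set (take g \<sigma>) = G \<and> set (take k \<sigma>) = F}"
    by auto
  ultimately show ?thesis
    using card_permutations_two_prefixes[of "{1..n}" G F g k] assms
    by (simp add: mult_ac)
qed

lemma binomial_ge_power_div:
  fixes N a A n :: nat
  assumes a: "1 \<le> a" "a \<le> A" and N: "real n / 3 \<le> real N" "a \<le> N"
  shows "real n ^ a / (3 * real A) ^ A \<le> real (N choose a)"
proof -
  have "(3 * real a) ^ a \<le> (3 * real A) ^ a"
    using a by (intro power_mono) auto
  also have "\<dots> \<le> (3 * real A) ^ A"
    using a by (intro power_increasing) auto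
  finally have "real n ^ a / (3 * real A) ^ A \<le> real n ^ a / (3 * real a) ^ a"
    using a by (intro divide_left_mono) auto
  also have "\<dots> = (real n / 3 / real a) ^ a"
    by (simp add: power_divide)
  also have "\<dots> \<le> (real N / real a) ^ a"
    using a N by (intro power_mono divide_right_mono) auto
  also have "\<dots> \<le> real (N choose a)"
    using N by (intro binomial_ge_n_over_k_pow_k)
  finally show ?thesis .
qed

lemma card_image_mult_ge:
  fixes g :: "'a \<Rightarrow> 'b"
  assumes "finite D" and fibre: "\<And>x. x \<in> D \<Longrightarrow> real (card {x'\<in>D. g x' = g x}) * b \<le> M"
  shows "real (card D) * b \<le> real (card (g ` D)) * M"
proof -
  have "card D = card (\<Union>y\<in>g ` D. {x\<in>D. g x = y})"
    by (rule arg_cong[of _ _ card]) auto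
  also have "\<dots> = (\<Sum>y\<in>g ` D. card {x\<in>D. g x = y})"
    using assms(1) by (intro card_UN_disjoint) auto
  finally have "real (card D) * b = (\<Sum>y\<in>g ` D. real (card {x\<in>D. g x = y}) * b)"
    by (simp add: sum_distrib_right)
  also have "\<dots> \<le> (\<Sum>y\<in>g ` D. M)"
    using fibre by (intro sum_mono) auto
  finally show ?thesis by simp
qed


section \<open>Windows on maximal chains\<close>

text \<open>A permutation \<sigma> of [n] defines the maximal chain of its prefixes. Its members in Fam
  have sizes chain_levels n Fam \<sigma> (ascending). A window (\<sigma>, s) selects q consecutive ones of
  them, from the s-th on; vertex i of the window is the (s + q - i)-th, so that vertex indices
  follow the reversed order of [q].\<close>

definition chain_levels :: "nat \<Rightarrow> nat set set \<Rightarrow> nat list \<Rightarrow> nat list" where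
  "chain_levels n Fam \<sigma> = sorted_list_of_set {k. k \<le> n \<and> set (take k \<sigma>) \<in> Fam}"

definition windows :: "nat \<Rightarrow> nat set set \<Rightarrow> nat \<Rightarrow> (nat list \<times> nat) set" where
  "windows n Fam q =
     {(\<sigma>, s). \<sigma> \<in> permutations_of_set {1..n} \<and> s + q \<le> length (chain_levels n Fam \<sigma>)}"

definition window_vertex :: "nat \<Rightarrow> nat set set \<Rightarrow> nat \<Rightarrow> nat list \<times> nat \<Rightarrow> nat \<Rightarrow> nat set" where
  "window_vertex n Fam q x i = set (take (chain_levels n Fam (fst x) ! (snd x + q - i)) (fst x))"

lemma sorted_chain_levels: "sorted_wrt (<) (chain_levels n Fam \<sigma>)"
  by (simp add: chain_levels_def)

lemma set_chain_levels: "set (chain_levels n Fam \<sigma>) = {k. k \<le> n \<and> set (take k \<sigma>) \<in> Fam}"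
  by (simp add: chain_levels_def)

lemma chain_levels_nth:
  assumes "a < length (chain_levels n Fam \<sigma>)"
  shows "chain_levels n Fam \<sigma> ! a \<le> n" "set (take (chain_levels n Fam \<sigma> ! a) \<sigma>) \<in> Fam"
  using nth_mem[OF assms] set_chain_levels[of n Fam \<sigma>] by auto

lemma chain_levels_gap:
  assumes "gapped l Fam" "\<sigma> \<in> permutations_of_set {1..n}"
    and "a \<le> b" "b < length (chain_levels n Fam \<sigma>)"
  shows "chain_levels n Fam \<sigma> ! a + l * (b - a) \<le> chain_levels n Fam \<sigma> ! b"
  using assms(3,4)
proof (induction b)
  case (Suc b)
  let ?L = "chain_levels n Fam \<sigma>"
  show ?case
  proof (cases "a = Suc b")
    case False
    have lt: "?L ! b < ?L ! Suc b"
      using sorted_wrt_nth_less[OF sorted_chain_levels] Suc.prems by simp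
    have mem: "set (take (?L ! b) \<sigma>) \<in> Fam" "set (take (?L ! Suc b) \<sigma>) \<in> Fam"
      and card: "card (set (take (?L ! b) \<sigma>)) = ?L ! b"
        "card (set (take (?L ! Suc b) \<sigma>)) = ?L ! Suc b"
      using chain_levels_nth[of b n Fam \<sigma>] chain_levels_nth[of "Suc b" n Fam \<sigma>] Suc.prems
        card_set_take_permutation[OF assms(2)] by auto
    have sub: "set (take (?L ! b) \<sigma>) \<subseteq> set (take (?L ! Suc b) \<sigma>)"
      using lt by (simp add: set_take_subset_set_take)
    then have "l \<le> card (set (take (?L ! Suc b) \<sigma>) - set (take (?L ! b) \<sigma>))"
      using assms(1) mem card lt unfolding gapped_def by (metis psubsetI less_irrefl)
    also have "\<dots> = ?L ! Suc b - ?L ! b"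
      using card sub by (simp add: card_Diff_subset)
    finally have "?L ! b + l \<le> ?L ! Suc b"
      using lt by linarith
    then show ?thesis
      using Suc False by (simp add: Suc_diff_le)
  qed simp
qed simp

lemma finite_windows: "finite (windows n Fam q)"
proof (rule finite_subset)
  show "windows n Fam q \<subseteq> permutations_of_set {1..n} \<times> {..Suc n}"
  proof clarify
    fix \<sigma> s assume "(\<sigma>, s) \<in> windows n Fam q"
    moreover have "length (chain_levels n Fam \<sigma>) \<le> card {..n}"
      unfolding chain_levels_def length_sorted_list_of_set by (intro card_mono) auto
    ultimately show "\<sigma> \<in> permutations_of_set {1..n} \<and> s \<in> {..Suc n}"
      by (auto simp: windows_def)
  qed
qed simp

lemma window_index_less:
  assumes "x \<in> windows n Fam q" "i \<in> {1..q}"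
  shows "snd x + q - i < length (chain_levels n Fam (fst x))"
  using assms by (auto simp: windows_def)

lemma window_permutation: "x \<in> windows n Fam q \<Longrightarrow> fst x \<in> permutations_of_set {1..n}"
  by (auto simp: windows_def)

lemma window_vertex_mem:
  "x \<in> windows n Fam q \<Longrightarrow> i \<in> {1..q} \<Longrightarrow> window_vertex n Fam q x i \<in> Fam"
  using chain_levels_nth(2)[OF window_index_less] by (simp add: window_vertex_def)

lemma card_window_vertex:
  assumes "x \<in> windows n Fam q" "i \<in> {1..q}"
  shows "card (window_vertex n Fam q x i) = chain_levels n Fam (fst x) ! (snd x + q - i)"
  using card_set_take_permutation[OF window_permutation chain_levels_nth(1)[OF window_index_less]]
    assms by (simp add: window_vertex_def)

lemma window_vertex_prefix:
  assumes "x \<in> windows n Fam q" "i \<in> {1..q}"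
  shows "set (take (card (window_vertex n Fam q x i)) (fst x)) = window_vertex n Fam q x i"
  using card_window_vertex[OF assms] by (simp add: window_vertex_def)

lemma window_vertex_psubset:
  assumes x: "x \<in> windows n Fam q" and ij: "i \<in> {1..q}" "j \<in> {1..q}" "j < i"
  shows "window_vertex n Fam q x i \<subset> window_vertex n Fam q x j"
proof -
  have "chain_levels n Fam (fst x) ! (snd x + q - i) < chain_levels n Fam (fst x) ! (snd x + q - j)"
    using sorted_wrt_nth_less[OF sorted_chain_levels] window_index_less[OF x] ij by auto
  then show ?thesis
    using card_window_vertex[OF x] ij
    by (metis psubsetI set_take_subset_set_take less_imp_le less_irrefl window_vertex_def)
qed

lemma window_vertex_gap:
  assumes "gapped l Fam" and x: "x \<in> windows n Fam q" and ij: "i \<in> {1..q}" "j \<in> {1..q}" "j < i"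
  shows "card (window_vertex n Fam q x i) + l * (i - j) \<le> card (window_vertex n Fam q x j)"
proof -
  have "(snd x + q - j) - (snd x + q - i) = i - j" using ij by auto
  then show ?thesis
    using chain_levels_gap[OF assms(1) window_permutation[OF x], of "snd x + q - i" "snd x + q - j"]
      window_index_less[OF x] ij card_window_vertex[OF x]
    by auto
qed

lemma window_vertex_inj:
  assumes x: "x \<in> windows n Fam q" and y: "y \<in> windows n Fam q" and i: "i \<in> {1..q}"
    and "fst x = fst y" and "window_vertex n Fam q x i = window_vertex n Fam q y i"
  shows "x = y"
proof -
  have "distinct (chain_levels n Fam (fst x))"
    using sorted_chain_levels strict_sorted_iff by blast
  then have "snd x + q - i = snd y + q - i"
    using assms card_window_vertex[OF x i] card_window_vertex[OF y i]
      window_index_less[OF x i] window_index_less[OF y i]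
    by (metis nth_eq_iff_index_eq)
  then have "snd x = snd y"
    using i by simp linarith
  then show ?thesis
    using assms(4) by (simp add: prod_eq_iff)
qed

lemma length_chain_levels:
  assumes \<sigma>: "\<sigma> \<in> permutations_of_set {1..n}" and Fam: "\<forall>F\<in>Fam. F \<subseteq> {1..n}"
  shows "length (chain_levels n Fam \<sigma>) = card {F\<in>Fam. set (take (card F) \<sigma>) = F}"
proof -
  have "length (chain_levels n Fam \<sigma>) = card {k. k \<le> n \<and> set (take k \<sigma>) \<in> Fam}"
    by (simp add: chain_levels_def)
  also have "\<dots> = card ((\<lambda>k. set (take k \<sigma>)) ` {k. k \<le> n \<and> set (take k \<sigma>) \<in> Fam})"
    using card_set_take_permutation[OF \<sigma>]
    by (intro card_image[symmetric] inj_onI) (metis mem_Collect_eq)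
  also have "(\<lambda>k. set (take k \<sigma>)) ` {k. k \<le> n \<and> set (take k \<sigma>) \<in> Fam}
      = {F\<in>Fam. set (take (card F) \<sigma>) = F}"
  proof (intro equalityI subsetI)
    fix F assume "F \<in> {F\<in>Fam. set (take (card F) \<sigma>) = F}"
    moreover from this have "card F \<le> n"
      using Fam card_mono[of "{1..n}" F] by auto
    ultimately show "F \<in> (\<lambda>k. set (take k \<sigma>)) ` {k. k \<le> n \<and> set (take k \<sigma>) \<in> Fam}"
      by (intro image_eqI[of _ _ "card F"]) auto
  qed (auto simp: card_set_take_permutation[OF \<sigma>])
  finally show ?thesis .
qed

text \<open>Lubell's double counting: a chain meeting Fam in L members carries L - q + 1 windows.\<close>

lemma card_windows_ge:
  assumes Fam: "\<forall>F\<in>Fam. F \<subseteq> {1..n}" "finite Fam" and q: "1 \<le> q"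
  shows "(\<Sum>F\<in>Fam. real (fact (card F) * fact (n - card F))) - fact n * (real q - 1)
           \<le> real (card (windows n Fam q))"
proof -
  define PS where "PS = permutations_of_set {1..n}"
  define L where "L = (\<lambda>\<sigma>. length (chain_levels n Fam \<sigma>))"
  have "real (L \<sigma>) - (real q - 1) \<le> real (card {s. s + q \<le> L \<sigma>})" for \<sigma>
  proof (cases "q \<le> L \<sigma>")
    case True
    then have "{s. s + q \<le> L \<sigma>} = {..L \<sigma> - q}" by auto
    then show ?thesis using True q by simp
  qed simp
  then have "(\<Sum>\<sigma>\<in>PS. real (L \<sigma>)) - real (card PS) * (real q - 1)
      \<le> (\<Sum>\<sigma>\<in>PS. real (card {s. s + q \<le> L \<sigma>}))"
    using sum_mono[of PS "\<lambda>\<sigma>. real (L \<sigma>) - (real q - 1)"] by (simp add: sum_subtractf)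
  also have "\<dots> = real (card (windows n Fam q))"
  proof -
    have "windows n Fam q = Sigma PS (\<lambda>\<sigma>. {s. s + q \<le> L \<sigma>})"
      by (auto simp: windows_def PS_def L_def)
    moreover have "finite {s. s + q \<le> L \<sigma>}" for \<sigma>
      by (rule finite_subset[of _ "{..L \<sigma>}"]) auto
    ultimately show ?thesis
      by (simp add: card_SigmaI PS_def)
  qed
  also have "(\<Sum>\<sigma>\<in>PS. real (L \<sigma>)) = (\<Sum>F\<in>Fam. real (fact (card F) * fact (n - card F)))"
  proof -
    have "(\<Sum>\<sigma>\<in>PS. real (L \<sigma>)) = (\<Sum>\<sigma>\<in>PS. \<Sum>F\<in>Fam. if set (take (card F) \<sigma>) = F then 1 else 0)"
      using length_chain_levels Fam by (simp add: L_def PS_def sum.If_cases Int_def)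
    also have "\<dots> = (\<Sum>F\<in>Fam. real (card {\<sigma>\<in>PS. set (take (card F) \<sigma>) = F}))"
      by (subst sum.swap) (simp add: sum.If_cases PS_def Int_def)
    also have "\<dots> = (\<Sum>F\<in>Fam. real (fact (card F) * fact (n - card F)))"
      using Fam by (intro sum.cong refl) (simp add: PS_def card_permutations_prefix)
    finally show ?thesis .
  qed
  finally show ?thesis by (simp add: PS_def)
qed

lemma sum_fact_eq_lubell_mass:
  assumes "\<forall>F\<in>Fam. F \<subseteq> {1..n}"
  shows "(\<Sum>F\<in>Fam. real (fact (card F) * fact (n - card F))) = fact n * lubell_mass n Fam"
  unfolding lubell_mass_def sum_distrib_left
proof (intro sum.cong refl)
  fix F assume "F \<in> Fam"
  then have "card F \<le> n" using assms card_mono[of "{1..n}" F] by auto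
  then show "real (fact (card F) * fact (n - card F)) = fact n * (1 / real (n choose card F))"
    by (simp add: binomial_fact)
qed


section \<open>Robust sets of window vertices\<close>

text \<open>Greedy pruning: repeatedly discard an element u of U that lies in fewer than \<omega> u of the
  sets vs x still contained in U; each removal destroys fewer than \<omega> u of them.\<close>

lemma prune_to_min_degree:
  fixes X :: "'x set" and vs :: "'x \<Rightarrow> 'u set" and \<omega> :: "'u \<Rightarrow> real"
  assumes "finite X" "finite U" "\<forall>u. 0 \<le> \<omega> u"
  shows "\<exists>R \<subseteq> U. (\<forall>u\<in>R. \<omega> u \<le> real (card {x\<in>X. vs x \<subseteq> R \<and> u \<in> vs x})) \<and>
           real (card {x\<in>X. vs x \<subseteq> U}) - (\<Sum>u\<in>U. \<omega> u) \<le> real (card {x\<in>X. vs x \<subseteq> R})"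
  using assms(2)
proof (induction "card U" arbitrary: U rule: less_induct)
  case less
  show ?case
  proof (cases "\<forall>u\<in>U. \<omega> u \<le> real (card {x\<in>X. vs x \<subseteq> U \<and> u \<in> vs x})")
    case True
    then show ?thesis
      using assms(3) by (intro exI[of _ U]) (simp add: sum_nonneg)
  next
    case False
    then obtain u where u: "u \<in> U" "real (card {x\<in>X. vs x \<subseteq> U \<and> u \<in> vs x}) < \<omega> u"
      by auto
    have "card (U - {u}) < card U"
      using less.prems u(1) by (rule card_Diff1_less)
    moreover have "finite (U - {u})"
      using less.prems by simp
    ultimately have "\<exists>R \<subseteq> U - {u}. (\<forall>w\<in>R. \<omega> w \<le> real (card {x\<in>X. vs x \<subseteq> R \<and> w \<in> vs x})) \<and>
        real (card {x\<in>X. vs x \<subseteq> U - {u}}) - (\<Sum>w\<in>U - {u}. \<omega> w) \<le> real (card {x\<in>X. vs x \<subseteq> R})"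
      by (rule less.hyps)
    then obtain R where R: "R \<subseteq> U - {u}" "\<forall>w\<in>R. \<omega> w \<le> real (card {x\<in>X. vs x \<subseteq> R \<and> w \<in> vs x})"
      "real (card {x\<in>X. vs x \<subseteq> U - {u}}) - (\<Sum>w\<in>U - {u}. \<omega> w) \<le> real (card {x\<in>X. vs x \<subseteq> R})"
      by blast
    have "{x\<in>X. vs x \<subseteq> U - {u}} = {x\<in>X. vs x \<subseteq> U} - {x\<in>X. vs x \<subseteq> U \<and> u \<in> vs x}"
      by auto
    then have "real (card {x\<in>X. vs x \<subseteq> U - {u}})
        = real (card {x\<in>X. vs x \<subseteq> U}) - real (card {x\<in>X. vs x \<subseteq> U \<and> u \<in> vs x})"
      using assms(1) by (simp add: card_Diff_subset card_mono of_nat_diff subset_eq)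
    moreover have "(\<Sum>w\<in>U. \<omega> w) = \<omega> u + (\<Sum>w\<in>U - {u}. \<omega> w)"
      using u(1) less.prems by (simp add: sum.remove)
    ultimately have "real (card {x\<in>X. vs x \<subseteq> U}) - (\<Sum>w\<in>U. \<omega> w) \<le> real (card {x\<in>X. vs x \<subseteq> R})"
      using R(3) u(2) by linarith
    then show ?thesis
      using R(1,2) by blast
  qed
qed

definition windows_in :: "nat \<Rightarrow> nat set set \<Rightarrow> nat \<Rightarrow> (nat \<times> nat set) set \<Rightarrow> (nat list \<times> nat) set" where
  "windows_in n Fam q R = {x \<in> windows n Fam q. \<forall>i\<in>{1..q}. (i, window_vertex n Fam q x i) \<in> R}"

definition robust :: "nat \<Rightarrow> nat set set \<Rightarrow> nat \<Rightarrow> real \<Rightarrow> (nat \<times> nat set) set \<Rightarrow> bool" where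
  "robust n Fam q \<delta> R \<longleftrightarrow> (\<forall>(i, F)\<in>R. \<delta> * real (fact (card F) * fact (n - card F))
      \<le> real (card {x \<in> windows_in n Fam q R. window_vertex n Fam q x i = F}))"

lemma exists_robust:
  assumes Fam: "\<forall>F\<in>Fam. F \<subseteq> {1..n}" and q: "1 \<le> q" and \<delta>: "0 \<le> \<delta>"
    and mass: "real q - 1 < lubell_mass n Fam * (1 - real q * \<delta>)"
  shows "\<exists>R \<subseteq> {1..q} \<times> Fam. robust n Fam q \<delta> R \<and> windows_in n Fam q R \<noteq> {}"
proof -
  have finFam: "finite Fam"
    using Fam by (intro finite_subset[of Fam "Pow {1..n}"]) auto
  define vs where "vs = (\<lambda>x. (\<lambda>i. (i, window_vertex n Fam q x i)) ` {1..q})"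
  define \<omega> where "\<omega> = (\<lambda>(i::nat, F::nat set). \<delta> * real (fact (card F) * fact (n - card F)))"
  define S where "S = (\<Sum>F\<in>Fam. real (fact (card F) * fact (n - card F)))"
  have U: "finite ({1..q} \<times> Fam)" "\<forall>u. 0 \<le> \<omega> u"
    using finFam \<delta> by (simp_all add: \<omega>_def split: prod.split)
  obtain R where R: "R \<subseteq> {1..q} \<times> Fam"
    "\<forall>u\<in>R. \<omega> u \<le> real (card {x\<in>windows n Fam q. vs x \<subseteq> R \<and> u \<in> vs x})"
    "real (card {x\<in>windows n Fam q. vs x \<subseteq> {1..q} \<times> Fam}) - (\<Sum>u\<in>{1..q} \<times> Fam. \<omega> u)
       \<le> real (card {x\<in>windows n Fam q. vs x \<subseteq> R})"
    using prune_to_min_degree[OF finite_windows[of n Fam q] U, of vs] by blast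
  have in_R: "{x\<in>windows n Fam q. vs x \<subseteq> R} = windows_in n Fam q R"
    by (simp add: vs_def windows_in_def image_subset_iff)
  have "robust n Fam q \<delta> R"
    unfolding robust_def
  proof clarify
    fix i F assume iF: "(i, F) \<in> R"
    then have "i \<in> {1..q}" using R(1) by blast
    then have "{x\<in>windows n Fam q. vs x \<subseteq> R \<and> (i, F) \<in> vs x}
        = {x \<in> windows_in n Fam q R. window_vertex n Fam q x i = F}"
      by (auto simp: vs_def windows_in_def image_subset_iff)
    moreover have "\<omega> (i, F) \<le> real (card {x\<in>windows n Fam q. vs x \<subseteq> R \<and> (i, F) \<in> vs x})"
      using R(2) iF by blast
    ultimately show "\<delta> * real (fact (card F) * fact (n - card F))
        \<le> real (card {x \<in> windows_in n Fam q R. window_vertex n Fam q x i = F})"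
      by (simp add: \<omega>_def)
  qed
  moreover have "windows_in n Fam q R \<noteq> {}"
  proof -
    have "{x\<in>windows n Fam q. vs x \<subseteq> {1..q} \<times> Fam} = windows n Fam q"
      using window_vertex_mem by (auto simp: vs_def)
    moreover have "(\<Sum>u\<in>{1..q} \<times> Fam. \<omega> u) = real q * \<delta> * S"
      by (simp add: sum.cartesian_product[symmetric] \<omega>_def S_def sum_distrib_left mult.assoc)
    ultimately have "real (card (windows n Fam q)) - real q * \<delta> * S
        \<le> real (card (windows_in n Fam q R))"
      using R(3) in_R by simp
    moreover have "S - fact n * (real q - 1) \<le> real (card (windows n Fam q))"
      using card_windows_ge[OF Fam finFam q] by (simp add: S_def)
    moreover have "S - fact n * (real q - 1) - real q * \<delta> * S
        = fact n * (lubell_mass n Fam * (1 - real q * \<delta>) - (real q - 1))"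
      using sum_fact_eq_lubell_mass[OF Fam, folded S_def] by (simp add: algebra_simps)
    moreover have "0 < fact n * (lubell_mass n Fam * (1 - real q * \<delta>) - (real q - 1))"
      using mass by simp
    ultimately have "0 < real (card (windows_in n Fam q R))"
      by linarith
    then show ?thesis by auto
  qed
  ultimately show ?thesis using R(1) by blast
qed


section \<open>Growing a tree poset leaf by leaf\<close>

lemma strict_poset_irrefl: "strict_poset V lt \<Longrightarrow> x \<in> V \<Longrightarrow> \<not> lt x x"
  by (simp add: strict_poset_def)

lemma strict_poset_trans:
  "strict_poset V lt \<Longrightarrow> x \<in> V \<Longrightarrow> y \<in> V \<Longrightarrow> z \<in> V \<Longrightarrow> lt x y \<Longrightarrow> lt y z \<Longrightarrow> lt x z"
  unfolding strict_poset_def by blast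

lemma strict_poset_conversep: "strict_poset V lt \<Longrightarrow> strict_poset V lt\<inverse>\<inverse>"
  unfolding strict_poset_def by blast

lemma hasse_edge_conversep: "hasse_edge V lt\<inverse>\<inverse> a b = hasse_edge V lt b a"
  unfolding hasse_edge_def by blast

lemma hasse_adj_conversep: "hasse_adj V lt\<inverse>\<inverse> = hasse_adj V lt"
  unfolding hasse_adj_def by (intro ext) (auto simp: hasse_edge_conversep)

lemma hasse_adj_commute: "hasse_adj V lt a b = hasse_adj V lt b a"
  by (auto simp: hasse_adj_def)

definition hasse_walk :: "nat set \<Rightarrow> (nat \<Rightarrow> nat \<Rightarrow> bool) \<Rightarrow> nat set \<Rightarrow> nat \<Rightarrow> nat \<Rightarrow> bool" where
  "hasse_walk V lt U a b \<longleftrightarrow> a \<in> U \<and> b \<in> U \<and> hasse_adj V lt a b"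

lemma hasse_walk_conversep: "hasse_walk V lt\<inverse>\<inverse> = hasse_walk V lt"
  by (intro ext) (simp add: hasse_walk_def hasse_adj_conversep)

lemma hasse_walk_rev:
  assumes "(hasse_walk V lt U)\<^sup>*\<^sup>* a b"
  shows "(hasse_walk V lt U)\<^sup>*\<^sup>* b a"
proof -
  have "(hasse_walk V lt U)\<inverse>\<inverse> = hasse_walk V lt U"
    by (intro ext) (auto simp: hasse_walk_def hasse_adj_def)
  then show ?thesis
    using assms rtranclp_conversep[of "hasse_walk V lt U"] by (metis conversepI)
qed

lemma hasse_walk_mono:
  assumes "(hasse_walk V lt U)\<^sup>*\<^sup>* a b" "U \<subseteq> U'"
  shows "(hasse_walk V lt U')\<^sup>*\<^sup>* a b"
  using assms(1) by (rule rtranclp_mono[THEN predicate2D, rotated])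
    (use assms(2) in \<open>auto simp: hasse_walk_def\<close>)

lemma rtranclp_imp_path:
  assumes "R\<^sup>*\<^sup>* a b"
  shows "\<exists>ps. ps \<noteq> [] \<and> hd ps = a \<and> last ps = b \<and> distinct ps \<and>
           (\<forall>i < length ps - 1. R (ps ! i) (ps ! Suc i)) \<and> set ps \<subseteq> insert a (Collect (Domainp R\<inverse>\<inverse>))"
  using assms
proof (induction rule: converse_rtranclp_induct)
  case base
  then show ?case by (intro exI[of _ "[b]"]) auto
next
  case (step a c)
  then obtain ps where ps: "ps \<noteq> []" "hd ps = c" "last ps = b" "distinct ps"
    "\<forall>i < length ps - 1. R (ps ! i) (ps ! Suc i)" "set ps \<subseteq> insert c (Collect (Domainp R\<inverse>\<inverse>))"
    by blast
  show ?case
  proof (cases "a \<in> set ps")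
    case True
    then obtain m where m: "m < length ps" "ps ! m = a" by (metis in_set_conv_nth)
    then show ?thesis
      using ps step(1)
      by (intro exI[of _ "drop m ps"])
        (auto simp: hd_drop_conv_nth dest: in_set_dropD)
  next
    case False
    have "\<forall>i < length (a # ps) - 1. R ((a # ps) ! i) ((a # ps) ! Suc i)"
      using ps step(1) by (auto simp: hd_conv_nth nth_Cons split: nat.split)
    then show ?thesis
      using ps False step(1) by (intro exI[of _ "a # ps"]) auto
  qed
qed

text \<open>In an acyclic Hasse diagram, two distinct neighbours of y cannot be joined by a walk
  avoiding y: together with y the walk would close a cycle.\<close>

lemma hasse_neighbours_not_joined:
  assumes nc: "\<not> graph_has_cycle V (hasse_adj V lt)" and y: "y \<in> V"
    and xw: "x \<noteq> w" "hasse_adj V lt y x" "hasse_adj V lt y w"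
    and walk: "(hasse_walk V lt U)\<^sup>*\<^sup>* x w" and U: "U \<subseteq> V - {y}" "x \<in> U"
  shows False
proof -
  obtain ps where ps: "ps \<noteq> []" "hd ps = x" "last ps = w" "distinct ps"
    "\<forall>i < length ps - 1. hasse_walk V lt U (ps ! i) (ps ! Suc i)"
    "set ps \<subseteq> insert x (Collect (Domainp (hasse_walk V lt U)\<inverse>\<inverse>))"
    using rtranclp_imp_path[OF walk] by blast
  have setU: "set ps \<subseteq> U"
    using ps(6) U(2) by (auto simp: hasse_walk_def)
  have "length ps \<noteq> 1" "length ps \<noteq> 0"
    using ps(1-3) xw(1) by (cases ps; auto)+
  then have len: "2 \<le> length ps"
    by linarith
  define cs where "cs = y # ps"
  have "\<forall>i < length cs - 1. hasse_adj V lt (cs ! i) (cs ! Suc i)"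
    using ps xw(2) by (auto simp: cs_def hd_conv_nth hasse_walk_def nth_Cons split: nat.split)
  moreover have "hasse_adj V lt (last cs) (hd cs)"
    using ps xw(3) hasse_adj_commute by (simp add: cs_def)
  moreover have "3 \<le> length cs" "distinct cs" "set cs \<subseteq> V"
    using len ps setU U y by (auto simp: cs_def)
  ultimately show False
    using nc unfolding graph_has_cycle_def by blast
qed

lemma exists_cover_below:
  assumes sp: "strict_poset V lt" and ab: "a \<in> V" "b \<in> V" "lt a b"
  shows "\<exists>w. hasse_edge V lt w b \<and> (w = a \<or> lt a w)"
proof -
  define Z where "Z = {w \<in> V. (w = a \<or> lt a w) \<and> lt w b}"
  define up where "up = (\<lambda>w. card {c \<in> V. lt w c})"
  have "a \<in> Z" using ab by (simp add: Z_def)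
  then obtain w where w: "w \<in> Z" and wmin: "\<And>z. z \<in> Z \<Longrightarrow> up w \<le> up z"
    using ex_has_least_nat[of "\<lambda>w. w \<in> Z" a up] by blast
  have "\<not> (\<exists>z\<in>V. lt w z \<and> lt z b)"
  proof
    assume "\<exists>z\<in>V. lt w z \<and> lt z b"
    then obtain z where z: "z \<in> V" "lt w z" "lt z b" by blast
    have wV: "w \<in> V" using w by (simp add: Z_def)
    have "z \<in> Z"
      using w z ab strict_poset_trans[OF sp, of a w z] unfolding Z_def by auto
    have "{c \<in> V. lt z c} \<subset> {c \<in> V. lt w c}"
      using z wV strict_poset_trans[OF sp, of w z] strict_poset_irrefl[OF sp, of z] by auto
    then have "up z < up w"
      unfolding up_def using sp by (intro psubset_card_mono) (auto simp: strict_poset_def)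
    with wmin[OF \<open>z \<in> Z\<close>] show False by simp
  qed
  then show ?thesis
    using w ab by (auto simp: Z_def hasse_edge_def)
qed

lemma exists_cover_above:
  assumes "strict_poset V lt" "a \<in> V" "b \<in> V" "lt a b"
  shows "\<exists>w. hasse_edge V lt a w \<and> (w = b \<or> lt w b)"
  using exists_cover_below[OF strict_poset_conversep[OF assms(1)], of b a] assms(2-4)
  by (simp add: hasse_edge_conversep)

lemma hasse_walk_interval:
  assumes sp: "strict_poset V lt"
  shows "a \<in> V \<Longrightarrow> b \<in> V \<Longrightarrow> lt a b \<Longrightarrow>
     (hasse_walk V lt {c \<in> V. (c = a \<or> lt a c) \<and> (c = b \<or> lt c b)})\<^sup>*\<^sup>* a b"
proof (induction "card {c \<in> V. lt a c \<and> lt c b}" arbitrary: b rule: less_induct)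
  case less
  note tr = strict_poset_trans[OF sp]
  define U where "U = {c \<in> V. (c = a \<or> lt a c) \<and> (c = b \<or> lt c b)}"
  obtain w where w: "hasse_edge V lt w b" "w = a \<or> lt a w"
    using exists_cover_below[OF sp less.prems] by blast
  have wV: "w \<in> V" "lt w b" using w by (auto simp: hasse_edge_def)
  have last: "hasse_walk V lt U w b"
    using w wV less.prems by (auto simp: hasse_walk_def U_def hasse_adj_def)
  show ?case
  proof (cases "w = a")
    case False
    then have aw: "lt a w" using w by simp
    have "{c \<in> V. lt a c \<and> lt c w} \<subset> {c \<in> V. lt a c \<and> lt c b}"
      using aw wV less.prems tr[of _ w b] strict_poset_irrefl[OF sp] by auto
    then have "card {c \<in> V. lt a c \<and> lt c w} < card {c \<in> V. lt a c \<and> lt c b}"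
      using sp by (intro psubset_card_mono) (auto simp: strict_poset_def)
    from less.hyps[OF this less.prems(1) wV(1) aw]
    have "(hasse_walk V lt U)\<^sup>*\<^sup>* a w"
      by (rule hasse_walk_mono) (use wV less.prems tr[of _ w b] in \<open>auto simp: U_def\<close>)
    then show ?thesis
      using last unfolding U_def[symmetric] by (rule rtranclp.rtrancl_into_rtrancl)
  qed (use last in \<open>simp add: U_def\<close>)
qed

text \<open>If a new element y is attached to a connected set S through its only Hasse neighbour
  x in S, and x is covered by y, then y is above exactly the elements of S below or equal to
  x, and below none of S: otherwise a cover chain would give a second path from y to S.\<close>

lemma leaf_above_relations:
  assumes sp: "strict_poset V lt" and nc: "\<not> graph_has_cycle V (hasse_adj V lt)"
    and S: "S \<subseteq> V" "y \<in> V" "y \<notin> S" "x \<in> S"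
    and xy: "hasse_edge V lt x y"
    and uniq: "\<forall>x'\<in>S. hasse_adj V lt x' y \<longrightarrow> x' = x"
    and conn: "\<forall>a\<in>S. \<forall>b\<in>S. (hasse_walk V lt S)\<^sup>*\<^sup>* a b" and zS: "z \<in> S"
  shows "lt z y \<Longrightarrow> z = x \<or> lt z x" and "\<not> lt y z"
proof -
  note irr = strict_poset_irrefl[OF sp] and tr = strict_poset_trans[OF sp]
  have zV: "z \<in> V" and xV: "x \<in> V" using zS S by auto
  have zx: "(hasse_walk V lt (V - {y}))\<^sup>*\<^sup>* z x"
    using conn zS S by (blast intro: hasse_walk_mono)
  have adjx: "hasse_adj V lt y x" using xy by (simp add: hasse_adj_def)
  have second_neighbour: False
    if w: "hasse_adj V lt y w" "w \<in> V" "w \<notin> S" "w \<noteq> y" "(hasse_walk V lt (V - {y}))\<^sup>*\<^sup>* w z" for w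
  proof -
    have "w \<noteq> x" using w S by auto
    then show False
      using hasse_neighbours_not_joined[OF nc S(2) _ w(1) adjx rtranclp_trans[OF w(5) zx]] w
      by auto
  qed
  show "z = x \<or> lt z x" if zy: "lt z y"
  proof (rule ccontr)
    assume nz: "\<not> (z = x \<or> lt z x)"
    obtain w where w: "hasse_edge V lt w y" "w = z \<or> lt z w"
      using exists_cover_below[OF sp zV S(2) zy] by blast
    have wS: "w \<notin> S" using uniq w nz by (auto simp: hasse_adj_def)
    then have "lt z w" using w zS by auto
    then have "(hasse_walk V lt (V - {y}))\<^sup>*\<^sup>* z w"
      using hasse_walk_interval[OF sp zV, of w] w(1) irr tr[of y w y] S(2)
      by (auto simp: hasse_edge_def elim!: hasse_walk_mono)
    then show False
      using second_neighbour[of w] w(1) wS irr S(2) hasse_walk_rev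
      by (auto simp: hasse_adj_def hasse_edge_def)
  qed
  show "\<not> lt y z"
  proof
    assume yz: "lt y z"
    obtain w where w: "hasse_edge V lt y w" "w = z \<or> lt w z"
      using exists_cover_above[OF sp S(2) zV yz] by blast
    have "w \<noteq> x" using w(1) xy irr tr[of x y x] xV S(2) by (auto simp: hasse_edge_def)
    then have wS: "w \<notin> S" using uniq w(1) by (auto simp: hasse_adj_def)
    then have "lt w z" using w zS by auto
    then have "(hasse_walk V lt (V - {y}))\<^sup>*\<^sup>* w z"
      using hasse_walk_interval[OF sp _ zV, of w] w(1) irr tr[of y w y] S(2)
      by (auto simp: hasse_edge_def elim!: hasse_walk_mono)
    then show False
      using second_neighbour[of w] w(1) wS irr S(2)
      by (auto simp: hasse_adj_def hasse_edge_def)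
  qed
qed

lemma leaf_below_relations:
  assumes sp: "strict_poset V lt" and nc: "\<not> graph_has_cycle V (hasse_adj V lt)"
    and S: "S \<subseteq> V" "y \<in> V" "y \<notin> S" "x \<in> S"
    and yx: "hasse_edge V lt y x"
    and uniq: "\<forall>x'\<in>S. hasse_adj V lt x' y \<longrightarrow> x' = x"
    and conn: "\<forall>a\<in>S. \<forall>b\<in>S. (hasse_walk V lt S)\<^sup>*\<^sup>* a b" and zS: "z \<in> S"
  shows "lt y z \<Longrightarrow> z = x \<or> lt x z" and "\<not> lt z y"
proof -
  have "hasse_edge V lt\<inverse>\<inverse> x y" using yx by (simp add: hasse_edge_conversep)
  note rel = leaf_above_relations[OF strict_poset_conversep[OF sp],
      unfolded hasse_adj_conversep hasse_walk_conversep, OF nc S this uniq conn zS]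
  show "lt y z \<Longrightarrow> z = x \<or> lt x z" "\<not> lt z y"
    using rel by auto
qed

lemma exists_leaf_to_attach:
  assumes tp: "tree_poset V lt" and S: "S \<subseteq> V" "v \<in> S" "S \<noteq> V"
    and conn: "\<forall>a\<in>S. \<forall>b\<in>S. (hasse_walk V lt S)\<^sup>*\<^sup>* a b"
  obtains x y where "x \<in> S" "y \<in> V" "y \<notin> S" "hasse_adj V lt x y"
    "\<forall>x'\<in>S. hasse_adj V lt x' y \<longrightarrow> x' = x"
    "\<forall>a\<in>insert y S. \<forall>b\<in>insert y S. (hasse_walk V lt (insert y S))\<^sup>*\<^sup>* a b"
proof -
  have nc: "\<not> graph_has_cycle V (hasse_adj V lt)" and gc: "graph_connected V (hasse_adj V lt)"
    using tp by (auto simp: tree_poset_def)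
  obtain u where u: "u \<in> V" "u \<notin> S" using S(1,3) by blast
  have "(\<lambda>a b. a \<in> V \<and> b \<in> V \<and> hasse_adj V lt a b)\<^sup>*\<^sup>* v u"
    using gc S(1,2) u unfolding graph_connected_def by blast
  then obtain x y where xy: "x \<in> V" "y \<in> V" "hasse_adj V lt x y" "x \<in> S" "y \<notin> S"
    using S(2) u(2) by (induction rule: rtranclp_induct) auto
  have uniq: "\<forall>x'\<in>S. hasse_adj V lt x' y \<longrightarrow> x' = x"
  proof (intro ballI impI)
    fix x' assume "x' \<in> S" "hasse_adj V lt x' y"
    then show "x' = x"
      using hasse_neighbours_not_joined[OF nc xy(2), of x' x S] S(1) conn xy hasse_adj_commute
      by blast
  qed
  have walk_y: "(hasse_walk V lt (insert y S))\<^sup>*\<^sup>* a y" if "a \<in> S" for a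
  proof -
    have "(hasse_walk V lt (insert y S))\<^sup>*\<^sup>* a x"
      using conn that xy(4) by (blast intro: hasse_walk_mono)
    moreover have "hasse_walk V lt (insert y S) x y"
      using xy by (simp add: hasse_walk_def)
    ultimately show ?thesis by (rule rtranclp.rtrancl_into_rtrancl)
  qed
  have "\<forall>a\<in>insert y S. \<forall>b\<in>insert y S. (hasse_walk V lt (insert y S))\<^sup>*\<^sup>* a b"
    using conn walk_y hasse_walk_rev by (blast intro: hasse_walk_mono)
  then show ?thesis
    using that xy uniq by blast
qed

lemma tree_poset_induct:
  assumes tp: "tree_poset V lt" and v: "v \<in> V" and single: "P {v}"
    and insert: "\<And>S x y. S \<subseteq> V \<Longrightarrow> v \<in> S \<Longrightarrow> x \<in> S \<Longrightarrow> y \<in> V \<Longrightarrow> y \<notin> S \<Longrightarrow>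
       hasse_adj V lt x y \<Longrightarrow> (\<forall>x'\<in>S. hasse_adj V lt x' y \<longrightarrow> x' = x) \<Longrightarrow>
       (\<forall>a\<in>S. \<forall>b\<in>S. (hasse_walk V lt S)\<^sup>*\<^sup>* a b) \<Longrightarrow> P S \<Longrightarrow> P (insert y S)"
  shows "P V"
proof -
  have fin: "finite V" using tp by (simp add: tree_poset_def strict_poset_def)
  have "\<exists>S. S \<subseteq> V \<and> v \<in> S \<and> card S = Suc m \<and> (\<forall>a\<in>S. \<forall>b\<in>S. (hasse_walk V lt S)\<^sup>*\<^sup>* a b) \<and> P S"
    if "Suc m \<le> card V" for m
    using that
  proof (induction m)
    case 0
    then show ?case using v single by (intro exI[of _ "{v}"]) auto
  next
    case (Suc m)
    then obtain S where S: "S \<subseteq> V" "v \<in> S" "card S = Suc m"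
      "\<forall>a\<in>S. \<forall>b\<in>S. (hasse_walk V lt S)\<^sup>*\<^sup>* a b" "P S" by auto
    have "S \<noteq> V" using S(3) Suc.prems by auto
    then obtain x y where xy: "x \<in> S" "y \<in> V" "y \<notin> S" "hasse_adj V lt x y"
      "\<forall>x'\<in>S. hasse_adj V lt x' y \<longrightarrow> x' = x"
      "\<forall>a\<in>insert y S. \<forall>b\<in>insert y S. (hasse_walk V lt (insert y S))\<^sup>*\<^sup>* a b"
      using exists_leaf_to_attach[OF tp S(1,2) _ S(4)] by blast
    moreover have "P (insert y S)"
      by (rule insert[OF S(1,2) xy(1-5) S(4,5)])
    moreover have "card (insert y S) = Suc (Suc m)"
      using S(1,3) xy(3) fin finite_subset by fastforce
    ultimately show ?case using S by (intro exI[of _ "insert y S"]) auto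
  qed
  moreover have "card V \<noteq> 0" using v fin by auto
  ultimately obtain S where "S \<subseteq> V" "card S = card V" "P S"
    by (metis Suc_pred' le_refl neq0_conv)
  then show ?thesis using card_subset_eq[OF fin] by metis
qed

definition hasse_diagram_on :: "nat set \<Rightarrow> (nat \<Rightarrow> nat \<Rightarrow> bool) \<Rightarrow> nat set \<Rightarrow> (nat \<times> nat) set" where
  "hasse_diagram_on V lt S = {e \<in> hasse_diagram V lt. fst e \<in> S \<and> snd e \<in> S}"

lemma hasse_diagram_on_insert:
  assumes sp: "strict_poset V lt" and S: "S \<subseteq> V" "x \<in> S" "y \<in> V" "y \<notin> S"
    and adj: "hasse_adj V lt x y" and uniq: "\<forall>x'\<in>S. hasse_adj V lt x' y \<longrightarrow> x' = x"
  defines "e \<equiv> if lt x y then (x, y) else (y, x)"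
  shows "hasse_diagram_on V lt (insert y S) = insert e (hasse_diagram_on V lt S)"
    and "e \<notin> hasse_diagram_on V lt S"
proof -
  have xV: "x \<in> V" using S by auto
  have asym: "\<not> (lt x y \<and> lt y x)"
    using strict_poset_irrefl[OF sp xV] strict_poset_trans[OF sp xV S(3) xV] by blast
  show "e \<notin> hasse_diagram_on V lt S"
    using S(4) by (auto simp: e_def hasse_diagram_on_def)
  have new: "e \<in> hasse_diagram V lt"
    using adj asym by (auto simp: e_def hasse_diagram_def hasse_adj_def hasse_edge_def)
  show "hasse_diagram_on V lt (insert y S) = insert e (hasse_diagram_on V lt S)"
  proof (intro equalityI subsetI)
    fix d assume d: "d \<in> hasse_diagram_on V lt (insert y S)"
    obtain a b where ab: "d = (a, b)" by (cases d)
    have edge: "hasse_edge V lt a b" "a \<in> insert y S" "b \<in> insert y S"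
      using d ab by (auto simp: hasse_diagram_on_def hasse_diagram_def)
    then have neq: "a \<noteq> b" using strict_poset_irrefl[OF sp] by (auto simp: hasse_edge_def)
    consider "a = y" | "b = y" | "a \<in> S" "b \<in> S" using edge(2,3) by blast
    then show "d \<in> insert e (hasse_diagram_on V lt S)"
    proof cases
      case 1
      then have "b = x" using uniq edge neq by (auto simp: hasse_adj_def)
      then show ?thesis using 1 ab edge(1) asym by (auto simp: e_def hasse_edge_def)
    next
      case 2
      then have "a = x" using uniq edge neq by (auto simp: hasse_adj_def)
      then show ?thesis using 2 ab edge(1) by (auto simp: e_def hasse_edge_def)
    next
      case 3
      then show ?thesis using d ab by (auto simp: hasse_diagram_on_def)
    qed
  next
    fix d assume "d \<in> insert e (hasse_diagram_on V lt S)"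
    then show "d \<in> hasse_diagram_on V lt (insert y S)"
      using new S(2) by (auto simp: hasse_diagram_on_def e_def split: if_splits)
  qed
qed


section \<open>Counting embeddings of a tree poset\<close>

lemma bad_windows_subset:
  assumes D: "\<forall>x\<in>D. x \<in> windows n Fam q \<and> set (take k (fst x)) = F \<and> card (G x) \<in> Gs
      \<and> set (take (card (G x)) (fst x)) = G x"
  shows "fst ` {x\<in>D. \<exists>H\<in>Hs. G x \<subseteq> H \<or> H \<subseteq> G x}
    \<subseteq> (\<Union>H\<in>Hs. {\<sigma> \<in> permutations_of_set {1..n}. set (take k \<sigma>) = F \<and>
          (\<exists>g\<in>Gs. set (take g \<sigma>) \<subseteq> H \<or> H \<subseteq> set (take g \<sigma>))})"
proof
  fix \<sigma> assume "\<sigma> \<in> fst ` {x\<in>D. \<exists>H\<in>Hs. G x \<subseteq> H \<or> H \<subseteq> G x}"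
  then obtain x H where x: "x \<in> D" "\<sigma> = fst x" "H \<in> Hs" "G x \<subseteq> H \<or> H \<subseteq> G x"
    by blast
  then have "\<sigma> \<in> permutations_of_set {1..n}" "set (take k \<sigma>) = F" "card (G x) \<in> Gs"
    "set (take (card (G x)) \<sigma>) = G x"
    using D x(1) window_permutation[of x n Fam q] by auto
  then show "\<sigma> \<in> (\<Union>H\<in>Hs. {\<sigma> \<in> permutations_of_set {1..n}. set (take k \<sigma>) = F \<and>
          (\<exists>g\<in>Gs. set (take g \<sigma>) \<subseteq> H \<or> H \<subseteq> set (take g \<sigma>))})"
    using x(3,4) by auto
qed

locale embedding_setting =
  fixes n q l T :: nat and Fam :: "nat set set" and \<delta> \<gamma> :: real
    and V :: "nat set" and lt :: "nat \<Rightarrow> nat \<Rightarrow> bool" and r :: "nat \<Rightarrow> nat"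
    and \<Gamma> :: "nat set set set" and R :: "(nat \<times> nat set) set" and v :: nat and F0 :: "nat set"
  assumes family: "\<forall>F\<in>Fam. F \<subseteq> {1..n}" "gapped l Fam"
    and width: "\<forall>F\<in>Fam. \<forall>G\<in>Fam. card G \<le> card F + T" "0 < T"
    and margins: "\<forall>F\<in>Fam. card F + T + l * q \<le> n \<and> l * q + T \<le> card F"
    and room: "\<forall>F\<in>Fam. 4 * real (card V) * real T \<le> \<delta> * real (n - card F)
                   \<and> 4 * real (card V) * real T \<le> \<delta> * real (card F)"
    and binomials: "\<forall>F\<in>Fam. \<forall>a\<in>{1..l * q}.
       3 * \<gamma> * real n ^ a \<le> \<delta> / 2 * real ((n - card F) choose a)
       \<and> 3 * \<gamma> * real n ^ a \<le> \<delta> / 2 * real (card F choose a)"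
    and small: "real (card V) \<le> 2 * \<gamma> * real n" "0 < \<gamma>" "0 < l" "1 \<le> n"
    and poset: "tree_poset V lt" "rev_hom V lt q r"
    and bounded: "bounded_collection n (\<gamma> / 2) l Fam \<Gamma>"
    and robust: "R \<subseteq> {1..q} \<times> Fam" "robust n Fam q \<delta> R"
    and root: "v \<in> V" "(r v, F0) \<in> R"
begin

abbreviation vertex :: "nat list \<times> nat \<Rightarrow> nat \<Rightarrow> nat set" where
  "vertex \<equiv> window_vertex n Fam q"

lemma finite_Fam: "finite Fam"
  using family(1) by (intro finite_subset[of Fam "Pow {1..n}"]) auto

lemma R_memD: "(i, F) \<in> R \<Longrightarrow> i \<in> {1..q} \<and> F \<in> Fam"
  using robust(1) by blast

lemma strict_poset_V: "strict_poset V lt"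
  using poset(1) by (simp add: tree_poset_def)

lemma acyclic_V: "\<not> graph_has_cycle V (hasse_adj V lt)"
  using poset(1) by (simp add: tree_poset_def)

lemma finite_V: "finite V"
  using strict_poset_V by (simp add: strict_poset_def)

lemma card_good_vertices:
  fixes b :: real and B :: "nat list set"
  assumes iF: "(i, F) \<in> R"
  defines "D \<equiv> {x \<in> windows_in n Fam q R. vertex x i = F}"
    and "M \<equiv> real (fact (card F) * fact (n - card F))"
  assumes bad: "fst ` {x\<in>D. bad x} \<subseteq> B" "finite B" "real (card B) \<le> \<delta> / 2 * M"
    and fibre: "\<And>x. x \<in> D \<Longrightarrow> real (card {x'\<in>D. vertex x' j = vertex x j}) * b \<le> M"
    and b: "0 \<le> b"
  shows "\<delta> / 2 * b \<le> real (card ((\<lambda>x. vertex x j) ` {x\<in>D. \<not> bad x}))"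
proof -
  define Good where "Good = {x\<in>D. \<not> bad x}"
  have finD: "finite D"
    using finite_windows by (rule finite_subset[rotated]) (auto simp: D_def windows_in_def)
  have "inj_on fst D"
    using window_vertex_inj[of _ n Fam q _ i] R_memD[OF iF]
    by (auto simp: D_def windows_in_def inj_on_def)
  then have "card {x\<in>D. bad x} = card (fst ` {x\<in>D. bad x})"
    by (intro card_image[symmetric]) (auto intro: inj_on_subset)
  also have "\<dots> \<le> card B"
    by (rule card_mono[OF bad(2,1)])
  finally have "card {x\<in>D. bad x} \<le> card B" .
  moreover have "\<delta> * M \<le> real (card D)"
    using robust(2) iF by (auto simp: robust_def D_def M_def)
  moreover have "card D = card (Good \<union> {x\<in>D. bad x})"
    by (rule arg_cong[of _ _ card]) (auto simp: Good_def)
  then have "card D = card Good + card {x\<in>D. bad x}"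
    using finD by (simp add: card_Un_disjoint Good_def disjoint_iff)
  ultimately have good: "\<delta> / 2 * M \<le> real (card Good)"
    using bad(3) by linarith
  have "real (card Good) * b \<le> real (card ((\<lambda>x. vertex x j) ` Good)) * M"
  proof (rule card_image_mult_ge)
    fix x assume x: "x \<in> Good"
    have "card {x'\<in>Good. vertex x' j = vertex x j} \<le> card {x'\<in>D. vertex x' j = vertex x j}"
      using finD by (intro card_mono) (auto simp: Good_def)
    then have "real (card {x'\<in>Good. vertex x' j = vertex x j}) * b
        \<le> real (card {x'\<in>D. vertex x' j = vertex x j}) * b"
      using b by (intro mult_right_mono) simp_all
    also have "\<dots> \<le> M"
      using fibre x by (simp add: Good_def)
    finally show "real (card {x'\<in>Good. vertex x' j = vertex x j}) * b \<le> M" .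
  qed (use finD in \<open>simp add: Good_def\<close>)
  moreover have "\<delta> / 2 * M * b \<le> real (card Good) * b"
    using good b by (rule mult_right_mono)
  ultimately have "M * (\<delta> / 2 * b) \<le> M * real (card ((\<lambda>x. vertex x j) ` Good))"
    by (simp add: mult_ac)
  moreover have "0 < M" by (simp add: M_def)
  ultimately show ?thesis
    unfolding Good_def by (rule mult_left_le_imp_le)
qed

lemma card_windows_with_vertices_le:
  assumes ij: "i \<in> {1..q}" "j \<in> {1..q}"
  shows "card {x \<in> windows_in n Fam q R. vertex x i = F \<and> vertex x j = G}
    \<le> card {\<sigma> \<in> permutations_of_set {1..n}. set (take (card F) \<sigma>) = F \<and> set (take (card G) \<sigma>) = G}"
proof (rule card_inj_on_le)
  show "inj_on fst {x \<in> windows_in n Fam q R. vertex x i = F \<and> vertex x j = G}"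
    using window_vertex_inj[of _ n Fam q _ i] ij by (auto simp: windows_in_def inj_on_def)
  show "fst ` {x \<in> windows_in n Fam q R. vertex x i = F \<and> vertex x j = G}
      \<subseteq> {\<sigma> \<in> permutations_of_set {1..n}. set (take (card F) \<sigma>) = F \<and> set (take (card G) \<sigma>) = G}"
  proof
    fix \<sigma> assume "\<sigma> \<in> fst ` {x \<in> windows_in n Fam q R. vertex x i = F \<and> vertex x j = G}"
    then obtain x where x: "x \<in> windows n Fam q" "vertex x i = F" "vertex x j = G" "\<sigma> = fst x"
      by (auto simp: windows_in_def)
    show "\<sigma> \<in> {\<sigma> \<in> permutations_of_set {1..n}. set (take (card F) \<sigma>) = F \<and> set (take (card G) \<sigma>) = G}"
      using window_permutation[OF x(1)] window_vertex_prefix[OF x(1) ij(1)]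
        window_vertex_prefix[OF x(1) ij(2)] x(2-4) by simp
  qed
qed simp

lemma card_candidates:
  fixes b :: real and c :: nat and Gs :: "nat set" and Rel :: "nat set \<Rightarrow> bool"
  assumes iF: "(i, F) \<in> R" and j: "j \<in> {1..q}"
    and window: "\<And>x. x \<in> windows_in n Fam q R \<Longrightarrow> vertex x i = F \<Longrightarrow>
      card (vertex x j) \<in> Gs \<and> Rel (vertex x j)"
    and Hs: "finite Hs" "card Hs \<le> card V"
    and bad: "\<And>H. H \<in> Hs \<Longrightarrow> card {\<sigma> \<in> permutations_of_set {1..n}. set (take (card F) \<sigma>) = F \<and>
      (\<exists>g\<in>Gs. set (take g \<sigma>) \<subseteq> H \<or> H \<subseteq> set (take g \<sigma>))} \<le> 2 * T * c"
    and few_bad: "4 * real (card V) * real T * real c \<le> \<delta> * real (fact (card F) * fact (n - card F))"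
    and fibre: "\<And>x. x \<in> windows_in n Fam q R \<Longrightarrow> vertex x i = F \<Longrightarrow>
      real (card {\<sigma> \<in> permutations_of_set {1..n}. set (take (card F) \<sigma>) = F \<and>
        set (take (card (vertex x j)) \<sigma>) = vertex x j}) * b \<le> real (fact (card F) * fact (n - card F))"
    and b: "0 \<le> b"
  shows "\<delta> / 2 * b \<le> real (card {G. (j, G) \<in> R \<and> Rel G \<and> (\<forall>H\<in>Hs. \<not> G \<subseteq> H \<and> \<not> H \<subseteq> G)})"
proof -
  define D where "D = {x \<in> windows_in n Fam q R. vertex x i = F}"
  define B where "B = (\<Union>H\<in>Hs. {\<sigma> \<in> permutations_of_set {1..n}. set (take (card F) \<sigma>) = F \<and>
      (\<exists>g\<in>Gs. set (take g \<sigma>) \<subseteq> H \<or> H \<subseteq> set (take g \<sigma>))})"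
  have i: "i \<in> {1..q}" using R_memD[OF iF] by simp
  have bad_windows: "fst ` {x\<in>D. \<exists>H\<in>Hs. vertex x j \<subseteq> H \<or> H \<subseteq> vertex x j} \<subseteq> B"
    unfolding B_def using window window_vertex_prefix[OF _ i] window_vertex_prefix[OF _ j]
    by (intro bad_windows_subset) (auto simp: D_def windows_in_def)
  have "card B \<le> card V * (2 * T * c)"
  proof -
    have "card B \<le> (\<Sum>H\<in>Hs. 2 * T * c)"
      unfolding B_def using bad by (intro card_UN_le[OF Hs(1), THEN order_trans] sum_mono)
    also have "\<dots> \<le> card V * (2 * T * c)"
      using Hs(2) by simp
    finally show ?thesis .
  qed
  then have "real (card B) \<le> real (card V * (2 * T * c))"
    by (simp only: of_nat_le_iff)
  then have card_B: "real (card B) \<le> \<delta> / 2 * real (fact (card F) * fact (n - card F))"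
    using few_bad by (simp add: algebra_simps; linarith)
  have fibre_D: "real (card {x'\<in>D. vertex x' j = vertex x j}) * b \<le> real (fact (card F) * fact (n - card F))"
    if x: "x \<in> D" for x
  proof -
    have "{x'\<in>D. vertex x' j = vertex x j}
        = {x' \<in> windows_in n Fam q R. vertex x' i = F \<and> vertex x' j = vertex x j}"
      by (auto simp: D_def)
    then have "card {x'\<in>D. vertex x' j = vertex x j}
        \<le> card {\<sigma> \<in> permutations_of_set {1..n}. set (take (card F) \<sigma>) = F \<and>
            set (take (card (vertex x j)) \<sigma>) = vertex x j}"
      using card_windows_with_vertices_le[OF i j] by simp
    then have "real (card {x'\<in>D. vertex x' j = vertex x j}) * b
        \<le> real (card {\<sigma> \<in> permutations_of_set {1..n}. set (take (card F) \<sigma>) = F \<and>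
            set (take (card (vertex x j)) \<sigma>) = vertex x j}) * b"
      using b by (intro mult_right_mono) simp_all
    also have "\<dots> \<le> real (fact (card F) * fact (n - card F))"
      using fibre x by (simp add: D_def)
    finally show ?thesis .
  qed
  have "finite B" by (simp add: B_def Hs(1))
  then have "\<delta> / 2 * b
      \<le> real (card ((\<lambda>x. vertex x j) ` {x\<in>D. \<not> (\<exists>H\<in>Hs. vertex x j \<subseteq> H \<or> H \<subseteq> vertex x j)}))"
    unfolding D_def
    by (rule card_good_vertices[OF iF bad_windows[unfolded D_def] _ card_B fibre_D[unfolded D_def] b])
  also have "\<dots> \<le> real (card {G. (j, G) \<in> R \<and> Rel G \<and> (\<forall>H\<in>Hs. \<not> G \<subseteq> H \<and> \<not> H \<subseteq> G)})"
    using window finite_Fam R_memD j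
    by (intro of_nat_mono card_mono) (auto simp: D_def windows_in_def intro: finite_subset[of _ Fam])
  finally show ?thesis .
qed

lemma card_candidates_above:
  assumes iF: "(i, F) \<in> R" and j: "j \<in> {1..q}" "j < i"
    and Hs: "finite Hs" "card Hs \<le> card V" "Hs \<subseteq> Fam" "\<forall>H\<in>Hs. \<not> H \<subseteq> F"
  shows "3 * \<gamma> * real n ^ (l * (i - j))
    \<le> real (card {G. (j, G) \<in> R \<and> F \<subset> G \<and> (\<forall>H\<in>Hs. \<not> G \<subseteq> H \<and> \<not> H \<subseteq> G)})"
proof -
  define k a where "k = card F" and "a = l * (i - j)"
  have i: "i \<in> {1..q}" and F: "F \<in> Fam" using R_memD[OF iF] by auto
  have a: "1 \<le> a" "a \<le> l * q"
    using i j small(3) by (auto simp: a_def intro: mult_le_mono)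
  have k: "k + T + l * q \<le> n" "F \<subseteq> {1..n}"
    using margins family(1) F by (auto simp: k_def)
  have window: "F \<subset> vertex x j \<and> k + a \<le> card (vertex x j) \<and> card (vertex x j) \<le> k + T
      \<and> vertex x j \<subseteq> {1..n}"
    if "x \<in> windows_in n Fam q R" "vertex x i = F" for x
  proof -
    have x: "x \<in> windows n Fam q" using that(1) by (simp add: windows_in_def)
    have "card (vertex x j) \<le> k + T" "vertex x j \<subseteq> {1..n}"
      using width(1) family(1) F window_vertex_mem[OF x j(1)] by (simp_all add: k_def)
    then show ?thesis
      using that(2) window_vertex_psubset[OF x i j(1,2)] window_vertex_gap[OF family(2) x i j(1,2)]
      by (simp add: k_def a_def)
  qed
  have "\<delta> / 2 * real ((n - k) choose a)
    \<le> real (card {G. (j, G) \<in> R \<and> F \<subset> G \<and> (\<forall>H\<in>Hs. \<not> G \<subseteq> H \<and> \<not> H \<subseteq> G)})"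
  proof (rule card_candidates[OF iF j(1) _ Hs(1,2), where Gs = "{k<..k+T}" and c = "fact k * fact (n - k - 1)"])
    show "card (vertex x j) \<in> {k<..k+T} \<and> F \<subset> vertex x j"
      if "x \<in> windows_in n Fam q R" "vertex x i = F" for x
      using window[OF that] a by auto
    show "card {\<sigma> \<in> permutations_of_set {1..n}. set (take (card F) \<sigma>) = F \<and>
        (\<exists>g\<in>{k<..k+T}. set (take g \<sigma>) \<subseteq> H \<or> H \<subseteq> set (take g \<sigma>))} \<le> 2 * T * (fact k * fact (n - k - 1))"
      if "H \<in> Hs" for H
      using card_prefix_comparable_above[of F n k T H] k Hs(3,4) family(1) width F that
      by (auto simp: k_def)
    have "0 < n - k" using k width(2) by linarith
    then have "fact (n - k) = (n - k) * fact (n - k - 1)"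
      using fact_reduce[of "n - k", where 'a = nat] by simp
    then show "4 * real (card V) * real T * real (fact k * fact (n - k - 1))
        \<le> \<delta> * real (fact (card F) * fact (n - card F))"
      using room F mult_right_mono[of _ _ "real (fact k * fact (n - k - 1))"]
      by (simp add: k_def mult_ac)
    show "real (card {\<sigma> \<in> permutations_of_set {1..n}. set (take (card F) \<sigma>) = F \<and>
        set (take (card (vertex x j)) \<sigma>) = vertex x j}) * real ((n - k) choose a)
        \<le> real (fact (card F) * fact (n - card F))"
      if "x \<in> windows_in n Fam q R" "vertex x i = F" for x
    proof -
      have "F \<subseteq> vertex x j" "vertex x j \<subseteq> {1..n}" "k + a \<le> card (vertex x j)"
        "card (vertex x j) + a \<le> n"
        using window[OF that] a k by auto
      then show ?thesis
        using card_two_prefixes_above_le[of F "vertex x j" n k "card (vertex x j)" a]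
        by (simp add: k_def flip: of_nat_mult)
    qed
  qed simp
  moreover have "3 * \<gamma> * real n ^ a \<le> \<delta> / 2 * real ((n - k) choose a)"
    using binomials F a by (auto simp: k_def)
  ultimately show ?thesis
    by (simp add: a_def)
qed

lemma card_candidates_below:
  assumes iF: "(i, F) \<in> R" and j: "j \<in> {1..q}" "i < j"
    and Hs: "finite Hs" "card Hs \<le> card V" "Hs \<subseteq> Fam" "\<forall>H\<in>Hs. \<not> F \<subseteq> H"
  shows "3 * \<gamma> * real n ^ (l * (j - i))
    \<le> real (card {G. (j, G) \<in> R \<and> G \<subset> F \<and> (\<forall>H\<in>Hs. \<not> G \<subseteq> H \<and> \<not> H \<subseteq> G)})"
proof -
  define k a where "k = card F" and "a = l * (j - i)"
  have i: "i \<in> {1..q}" and F: "F \<in> Fam" using R_memD[OF iF] by auto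
  have a: "1 \<le> a" "a \<le> l * q"
    using i j small(3) by (auto simp: a_def intro: mult_le_mono)
  have k: "l * q + T \<le> k" "F \<subseteq> {1..n}"
    using margins family(1) F by (auto simp: k_def)
  have window: "vertex x j \<subset> F \<and> card (vertex x j) + a \<le> k \<and> k \<le> card (vertex x j) + T
      \<and> vertex x j \<subseteq> {1..n}"
    if "x \<in> windows_in n Fam q R" "vertex x i = F" for x
  proof -
    have x: "x \<in> windows n Fam q" using that(1) by (simp add: windows_in_def)
    have "k \<le> card (vertex x j) + T" "vertex x j \<subseteq> {1..n}"
      using width(1) family(1) F window_vertex_mem[OF x j(1)] by (simp_all add: k_def)
    then show ?thesis
      using that(2) window_vertex_psubset[OF x j(1) i j(2)] window_vertex_gap[OF family(2) x j(1) i j(2)]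
      by (simp add: k_def a_def)
  qed
  have "\<delta> / 2 * real (k choose a)
    \<le> real (card {G. (j, G) \<in> R \<and> G \<subset> F \<and> (\<forall>H\<in>Hs. \<not> G \<subseteq> H \<and> \<not> H \<subseteq> G)})"
  proof (rule card_candidates[OF iF j(1) _ Hs(1,2), where Gs = "{k-T..<k}" and c = "fact (k - 1) * fact (n - k)"])
    show "card (vertex x j) \<in> {k-T..<k} \<and> vertex x j \<subset> F"
      if "x \<in> windows_in n Fam q R" "vertex x i = F" for x
      using window[OF that] a by auto
    show "card {\<sigma> \<in> permutations_of_set {1..n}. set (take (card F) \<sigma>) = F \<and>
        (\<exists>g\<in>{k-T..<k}. set (take g \<sigma>) \<subseteq> H \<or> H \<subseteq> set (take g \<sigma>))} \<le> 2 * T * (fact (k - 1) * fact (n - k))"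
      if "H \<in> Hs" for H
      using card_prefix_comparable_below[of F n k T H] k Hs(3,4) family(1) width F that
      by (auto simp: k_def)
    have "0 < k" using k width(2) by linarith
    then have "fact k = k * fact (k - 1)"
      using fact_reduce[of k, where 'a = nat] by simp
    then show "4 * real (card V) * real T * real (fact (k - 1) * fact (n - k))
        \<le> \<delta> * real (fact (card F) * fact (n - card F))"
      using room F mult_right_mono[of _ _ "real (fact (k - 1) * fact (n - k))"]
      by (simp add: k_def mult_ac)
    show "real (card {\<sigma> \<in> permutations_of_set {1..n}. set (take (card F) \<sigma>) = F \<and>
        set (take (card (vertex x j)) \<sigma>) = vertex x j}) * real (k choose a)
        \<le> real (fact (card F) * fact (n - card F))"
      if "x \<in> windows_in n Fam q R" "vertex x i = F" for x
    proof -
      have "vertex x j \<subseteq> F" "card (vertex x j) + a \<le> k" "a \<le> card (vertex x j)"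
        using window[OF that] a k by auto
      then show ?thesis
        using card_two_prefixes_below_le[of "vertex x j" F n k "card (vertex x j)" a] k(2)
        by (simp add: k_def flip: of_nat_mult)
    qed
  qed simp
  moreover have "3 * \<gamma> * real n ^ a \<le> \<delta> / 2 * real (k choose a)"
    using binomials F a by (auto simp: k_def)
  ultimately show ?thesis
    by (simp add: a_def)
qed

text \<open>The invariant (r a, \<phi> a) \<in> R is what keeps every extension step possible.\<close>

definition partial_embeddings :: "nat set \<Rightarrow> (nat \<Rightarrow> nat set) set" where
  "partial_embeddings S = {\<phi> \<in> S \<rightarrow>\<^sub>E Fam. \<phi> v = F0 \<and> inj_on \<phi> S \<and>
     (\<forall>a\<in>S. \<forall>b\<in>S. \<phi> a \<subset> \<phi> b \<longleftrightarrow> lt a b) \<and> \<phi> ` S \<notin> \<Gamma> \<and> (\<forall>a\<in>S. (r a, \<phi> a) \<in> R)}"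

lemma finite_partial_embeddings:
  assumes "finite S"
  shows "finite (partial_embeddings S)"
proof (rule finite_subset)
  show "partial_embeddings S \<subseteq> S \<rightarrow>\<^sub>E Fam"
    unfolding partial_embeddings_def by blast
  show "finite (S \<rightarrow>\<^sub>E Fam)"
    by (intro finite_PiE assms finite_Fam)
qed

lemma finite_extensions: "finite {G. \<phi>(y := G) \<in> partial_embeddings (insert y S)}"
proof (rule finite_subset[OF _ finite_Fam])
  show "{G. \<phi>(y := G) \<in> partial_embeddings (insert y S)} \<subseteq> Fam"
    unfolding partial_embeddings_def by (auto simp: PiE_iff)
qed

lemma fun_upd_mem_partial_embeddings:
  assumes \<phi>: "\<phi> \<in> partial_embeddings S" and S: "v \<in> S" "y \<notin> S" "\<not> lt y y"
    and G: "G \<in> Fam" "(r y, G) \<in> R" "G \<notin> \<phi> ` S" "insert G (\<phi> ` S) \<notin> \<Gamma>"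
    and rel: "\<forall>z\<in>S. (\<phi> z \<subset> G \<longleftrightarrow> lt z y) \<and> (G \<subset> \<phi> z \<longleftrightarrow> lt y z)"
  shows "\<phi>(y := G) \<in> partial_embeddings (insert y S)"
proof -
  have \<phi>S: "\<phi> \<in> S \<rightarrow>\<^sub>E Fam" "\<phi> v = F0" "inj_on \<phi> S" "\<forall>a\<in>S. \<forall>b\<in>S. \<phi> a \<subset> \<phi> b \<longleftrightarrow> lt a b"
    "\<forall>a\<in>S. (r a, \<phi> a) \<in> R"
    using \<phi> by (auto simp: partial_embeddings_def)
  have "\<phi>(y := G) \<in> insert y S \<rightarrow>\<^sub>E Fam"
    using \<phi>S(1) G(1) S(2) by (auto simp: PiE_def extensional_def Pi_def)
  moreover have "inj_on (\<phi>(y := G)) (insert y S)"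
    using \<phi>S(3) G(3) S(2) by (auto simp: inj_on_def)
  moreover have "\<forall>a\<in>insert y S. \<forall>b\<in>insert y S. (\<phi>(y := G)) a \<subset> (\<phi>(y := G)) b \<longleftrightarrow> lt a b"
    using \<phi>S(4) rel S(2,3) by auto
  moreover have "\<phi>(y := G) ` insert y S = insert G (\<phi> ` S)"
    using S(2) by auto
  ultimately show ?thesis
    using \<phi>S(2,5) G(2,4) S(1,2) by (auto simp: partial_embeddings_def)
qed

lemma partial_embedding_image:
  assumes "\<phi> \<in> partial_embeddings S" "S \<subseteq> V" "Z \<subseteq> S"
  shows "finite (\<phi> ` Z)" "card (\<phi> ` Z) \<le> card V" "\<phi> ` Z \<subseteq> Fam"
proof -
  have "Z \<subseteq> V" using assms(2,3) by blast
  then have "finite Z" "card Z \<le> card V"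
    using finite_V by (auto intro: finite_subset card_mono)
  then show "finite (\<phi> ` Z)" "card (\<phi> ` Z) \<le> card V"
    using card_image_le[of Z \<phi>] by auto
  show "\<phi> ` Z \<subseteq> Fam"
    using assms(1,3) by (auto simp: partial_embeddings_def PiE_iff)
qed

lemma card_extensions_ge:
  assumes \<phi>: "\<phi> \<in> partial_embeddings S" and S: "S \<subseteq> V" "v \<in> S" "y \<in> V" "y \<notin> S"
    and N: "N \<subseteq> Fam" "\<forall>G\<in>N. (r y, G) \<in> R"
      "\<forall>G\<in>N. \<forall>z\<in>S. (\<phi> z \<subset> G \<longleftrightarrow> lt z y) \<and> (G \<subset> \<phi> z \<longleftrightarrow> lt y z)"
    and a: "l \<le> a" and card_N: "3 * \<gamma> * real n ^ a \<le> real (card N)"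
  shows "\<gamma> / 2 * real n ^ a \<le> real (card {G. \<phi>(y := G) \<in> partial_embeddings (insert y S)})"
proof -
  define Bad where "Bad = {G\<in>Fam. insert G (\<phi> ` S) \<in> \<Gamma>}"
  note image = partial_embedding_image[OF \<phi> S(1) subset_refl]
  have "\<not> lt y y" using strict_poset_irrefl[OF strict_poset_V S(3)] .
  have "N - \<phi> ` S - Bad \<subseteq> {G. \<phi>(y := G) \<in> partial_embeddings (insert y S)}"
  proof
    fix G assume G: "G \<in> N - \<phi> ` S - Bad"
    then have "G \<in> Fam" "insert G (\<phi> ` S) \<notin> \<Gamma>"
      using N(1) by (auto simp: Bad_def)
    then show "G \<in> {G. \<phi>(y := G) \<in> partial_embeddings (insert y S)}"
      using fun_upd_mem_partial_embeddings[OF \<phi> S(2,4) \<open>\<not> lt y y\<close>, of G] N(2,3) G by blast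
  qed
  then have ext: "card (N - \<phi> ` S - Bad) \<le> card {G. \<phi>(y := G) \<in> partial_embeddings (insert y S)}"
    by (rule card_mono[OF finite_extensions])
  have "card N \<le> card ((N - \<phi> ` S - Bad) \<union> \<phi> ` S \<union> Bad)"
    using finite_Fam N(1) image(1) by (intro card_mono) (auto simp: Bad_def intro: finite_subset)
  then have split: "card N \<le> card (N - \<phi> ` S - Bad) + card (\<phi> ` S) + card Bad"
    by (meson card_Un_le add_le_mono1 le_trans)
  have "2 * \<gamma> * real n \<le> 2 * \<gamma> * real n ^ a"
    using power_increasing[of 1 a "real n"] a small(2-4) by simp
  then have image_small: "real (card (\<phi> ` S)) \<le> 2 * \<gamma> * real n ^ a"
    using image(2) small(1) of_nat_mono[of "card (\<phi> ` S)" "card V"] by linarith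
  have "real (card Bad) < \<gamma> / 2 * real n ^ l"
    using bounded image(3) \<phi> by (auto simp: bounded_collection_def Bad_def partial_embeddings_def)
  moreover have "\<gamma> / 2 * real n ^ l \<le> \<gamma> / 2 * real n ^ a"
    using power_increasing[OF a, of "real n"] small(2,4) by simp
  ultimately show ?thesis
    using card_N ext split image_small by linarith
qed

lemma card_extensions_above:
  assumes \<phi>: "\<phi> \<in> partial_embeddings S" and S: "S \<subseteq> V" "v \<in> S" "x \<in> S" "y \<in> V" "y \<notin> S"
    and xy: "hasse_edge V lt x y" and uniq: "\<forall>x'\<in>S. hasse_adj V lt x' y \<longrightarrow> x' = x"
    and conn: "\<forall>a\<in>S. \<forall>b\<in>S. (hasse_walk V lt S)\<^sup>*\<^sup>* a b"
  shows "\<gamma> / 2 * real n ^ (l * (r x - r y))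
    \<le> real (card {G. \<phi>(y := G) \<in> partial_embeddings (insert y S)})"
proof -
  have \<phi>S: "\<phi> \<in> S \<rightarrow>\<^sub>E Fam" "inj_on \<phi> S" "\<forall>a\<in>S. \<forall>b\<in>S. \<phi> a \<subset> \<phi> b \<longleftrightarrow> lt a b" "(r x, \<phi> x) \<in> R"
    using \<phi> S(3) by (auto simp: partial_embeddings_def)
  note rel = leaf_above_relations[OF strict_poset_V acyclic_V S(1,4,5,3) xy uniq conn]
  have xV: "x \<in> V" and lxy: "lt x y" using S xy by (auto simp: hasse_edge_def)
  have r: "r y \<in> {1..q}" "r y < r x"
    using poset(2) xV S(4) lxy by (auto simp: rev_hom_def)
  define Hs where "Hs = \<phi> ` {z\<in>S. \<not> lt z y}"
  define N where "N = {G. (r y, G) \<in> R \<and> \<phi> x \<subset> G \<and> (\<forall>H\<in>Hs. \<not> G \<subseteq> H \<and> \<not> H \<subseteq> G)}"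
  have "\<not> H \<subseteq> \<phi> x" if H: "H \<in> Hs" for H
  proof
    obtain z where z: "z \<in> S" "\<not> lt z y" "H = \<phi> z" using H by (auto simp: Hs_def)
    assume "H \<subseteq> \<phi> x"
    then have "z = x \<or> lt z x"
      using \<phi>S(2,3) z S(3) by (metis inj_on_contraD psubsetI)
    then show False
      using z lxy strict_poset_trans[OF strict_poset_V _ xV S(4)] S(1) by auto
  qed
  moreover have "finite Hs" "card Hs \<le> card V" "Hs \<subseteq> Fam"
    unfolding Hs_def by (intro partial_embedding_image[OF \<phi> S(1)]; blast)+
  ultimately have card_N: "3 * \<gamma> * real n ^ (l * (r x - r y)) \<le> real (card N)"
    unfolding N_def using card_candidates_above[OF \<phi>S(4) r] by blast
  have N_rel: "\<forall>G\<in>N. \<forall>z\<in>S. (\<phi> z \<subset> G \<longleftrightarrow> lt z y) \<and> (G \<subset> \<phi> z \<longleftrightarrow> lt y z)"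
  proof (intro ballI)
    fix G z assume G: "G \<in> N" and z: "z \<in> S"
    show "(\<phi> z \<subset> G \<longleftrightarrow> lt z y) \<and> (G \<subset> \<phi> z \<longleftrightarrow> lt y z)"
    proof (cases "lt z y")
      case True
      then have "\<phi> z \<subseteq> \<phi> x" using rel(1)[OF z] \<phi>S(3) z S(3) by blast
      then show ?thesis using G True rel(2)[OF z] by (auto simp: N_def)
    next
      case False
      then show ?thesis using G z rel(2)[OF z] by (auto simp: N_def Hs_def)
    qed
  qed
  have N_R: "N \<subseteq> Fam" "\<forall>G\<in>N. (r y, G) \<in> R"
    using R_memD by (auto simp: N_def)
  have a: "l \<le> l * (r x - r y)"
  proof -
    have "1 \<le> r x - r y" using r(2) by linarith
    then show ?thesis using mult_le_mono2[of 1 "r x - r y" l] by simp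
  qed
  show ?thesis
    by (rule card_extensions_ge[OF \<phi> S(1,2,4,5) N_R N_rel a card_N])
qed

lemma card_extensions_below:
  assumes \<phi>: "\<phi> \<in> partial_embeddings S" and S: "S \<subseteq> V" "v \<in> S" "x \<in> S" "y \<in> V" "y \<notin> S"
    and yx: "hasse_edge V lt y x" and uniq: "\<forall>x'\<in>S. hasse_adj V lt x' y \<longrightarrow> x' = x"
    and conn: "\<forall>a\<in>S. \<forall>b\<in>S. (hasse_walk V lt S)\<^sup>*\<^sup>* a b"
  shows "\<gamma> / 2 * real n ^ (l * (r y - r x))
    \<le> real (card {G. \<phi>(y := G) \<in> partial_embeddings (insert y S)})"
proof -
  have \<phi>S: "\<phi> \<in> S \<rightarrow>\<^sub>E Fam" "inj_on \<phi> S" "\<forall>a\<in>S. \<forall>b\<in>S. \<phi> a \<subset> \<phi> b \<longleftrightarrow> lt a b" "(r x, \<phi> x) \<in> R"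
    using \<phi> S(3) by (auto simp: partial_embeddings_def)
  note rel = leaf_below_relations[OF strict_poset_V acyclic_V S(1,4,5,3) yx uniq conn]
  have xV: "x \<in> V" and lyx: "lt y x" using S yx by (auto simp: hasse_edge_def)
  have r: "r y \<in> {1..q}" "r x < r y"
    using poset(2) xV S(4) lyx by (auto simp: rev_hom_def)
  define Hs where "Hs = \<phi> ` {z\<in>S. \<not> lt y z}"
  define N where "N = {G. (r y, G) \<in> R \<and> G \<subset> \<phi> x \<and> (\<forall>H\<in>Hs. \<not> G \<subseteq> H \<and> \<not> H \<subseteq> G)}"
  have "\<not> \<phi> x \<subseteq> H" if H: "H \<in> Hs" for H
  proof
    obtain z where z: "z \<in> S" "\<not> lt y z" "H = \<phi> z" using H by (auto simp: Hs_def)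
    assume "\<phi> x \<subseteq> H"
    then have "z = x \<or> lt x z"
      using \<phi>S(2,3) z S(3) by (metis inj_on_contraD psubsetI)
    then show False
      using z lyx strict_poset_trans[OF strict_poset_V S(4) xV] S(1) by auto
  qed
  moreover have "finite Hs" "card Hs \<le> card V" "Hs \<subseteq> Fam"
    unfolding Hs_def by (intro partial_embedding_image[OF \<phi> S(1)]; blast)+
  ultimately have card_N: "3 * \<gamma> * real n ^ (l * (r y - r x)) \<le> real (card N)"
    unfolding N_def using card_candidates_below[OF \<phi>S(4) r] by blast
  have N_rel: "\<forall>G\<in>N. \<forall>z\<in>S. (\<phi> z \<subset> G \<longleftrightarrow> lt z y) \<and> (G \<subset> \<phi> z \<longleftrightarrow> lt y z)"
  proof (intro ballI)
    fix G z assume G: "G \<in> N" and z: "z \<in> S"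
    show "(\<phi> z \<subset> G \<longleftrightarrow> lt z y) \<and> (G \<subset> \<phi> z \<longleftrightarrow> lt y z)"
    proof (cases "lt y z")
      case True
      then have "\<phi> x \<subseteq> \<phi> z" using rel(1)[OF z] \<phi>S(3) z S(3) by blast
      then show ?thesis using G True rel(2)[OF z] by (auto simp: N_def)
    next
      case False
      then show ?thesis using G z rel(2)[OF z] by (auto simp: N_def Hs_def)
    qed
  qed
  have N_R: "N \<subseteq> Fam" "\<forall>G\<in>N. (r y, G) \<in> R"
    using R_memD by (auto simp: N_def)
  have a: "l \<le> l * (r y - r x)"
  proof -
    have "1 \<le> r y - r x" using r(2) by linarith
    then show ?thesis using mult_le_mono2[of 1 "r y - r x" l] by simp
  qed
  show ?thesis
    by (rule card_extensions_ge[OF \<phi> S(1,2,4,5) N_R N_rel a card_N])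
qed


lemma card_extensions_ge_hasse_adj:
  assumes \<phi>: "\<phi> \<in> partial_embeddings S" and S: "S \<subseteq> V" "v \<in> S" "x \<in> S" "y \<in> V" "y \<notin> S"
    and adj: "hasse_adj V lt x y" and uniq: "\<forall>x'\<in>S. hasse_adj V lt x' y \<longrightarrow> x' = x"
    and conn: "\<forall>a\<in>S. \<forall>b\<in>S. (hasse_walk V lt S)\<^sup>*\<^sup>* a b"
  shows "\<gamma> / 2 * real n ^ (l * nat \<bar>int (r y) - int (r x)\<bar>)
    \<le> real (card {G. \<phi>(y := G) \<in> partial_embeddings (insert y S)})"
proof -
  have xV: "x \<in> V" using S by auto
  show ?thesis
  proof (cases "hasse_edge V lt x y")
    case True
    then have "r y < r x" using poset(2) xV S(4) by (auto simp: rev_hom_def hasse_edge_def)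
    then have "nat \<bar>int (r y) - int (r x)\<bar> = r x - r y" by simp
    then show ?thesis
      using card_extensions_above[OF \<phi> S True uniq conn] by (simp only:)
  next
    case False
    then have yx: "hasse_edge V lt y x" using adj by (simp add: hasse_adj_def)
    then have "r x < r y" using poset(2) xV S(4) by (auto simp: rev_hom_def hasse_edge_def)
    then have "nat \<bar>int (r y) - int (r x)\<bar> = r y - r x" by simp
    then show ?thesis
      using card_extensions_below[OF \<phi> S yx uniq conn] by (simp only:)
  qed
qed

lemma card_partial_embeddings_insert:
  assumes S: "S \<subseteq> V" "v \<in> S" "x \<in> S" "y \<in> V" "y \<notin> S"
    and adj: "hasse_adj V lt x y" and uniq: "\<forall>x'\<in>S. hasse_adj V lt x' y \<longrightarrow> x' = x"
    and conn: "\<forall>a\<in>S. \<forall>b\<in>S. (hasse_walk V lt S)\<^sup>*\<^sup>* a b"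
  shows "\<gamma> / 2 * real n ^ (l * nat \<bar>int (r y) - int (r x)\<bar>) * real (card (partial_embeddings S))
    \<le> real (card (partial_embeddings (insert y S)))"
proof -
  define ext where "ext = (\<lambda>\<phi>. (\<lambda>G. \<phi>(y := G)) ` {G. \<phi>(y := G) \<in> partial_embeddings (insert y S)})"
  have finS: "finite S" using S(1) finite_V finite_subset by blast
  have card_ext: "card (ext \<phi>) = card {G. \<phi>(y := G) \<in> partial_embeddings (insert y S)}" for \<phi>
    unfolding ext_def by (rule card_image) (metis (no_types, lifting) fun_upd_same inj_onI)
  \<comment> \<open>members of partial_embeddings S are undefined at y, so \<phi>(y := G) determines \<phi>\<close>
  have "\<forall>\<phi>1\<in>partial_embeddings S. \<forall>\<phi>2\<in>partial_embeddings S. \<phi>1 \<noteq> \<phi>2 \<longrightarrow> ext \<phi>1 \<inter> ext \<phi>2 = {}"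
  proof (intro ballI impI, rule ccontr)
    fix \<phi>1 \<phi>2 assume \<phi>: "\<phi>1 \<in> partial_embeddings S" "\<phi>2 \<in> partial_embeddings S" "\<phi>1 \<noteq> \<phi>2"
      and "ext \<phi>1 \<inter> ext \<phi>2 \<noteq> {}"
    then obtain G1 G2 where "\<phi>1(y := G1) = \<phi>2(y := G2)" by (auto simp: ext_def)
    moreover have "\<phi>1 y = undefined" "\<phi>2 y = undefined"
      using \<phi> S(5) by (auto simp: partial_embeddings_def PiE_def extensional_def)
    ultimately have "\<phi>1 = \<phi>2" by (metis fun_upd_triv fun_upd_upd)
    then show False using \<phi>(3) by simp
  qed
  then have "(\<Sum>\<phi>\<in>partial_embeddings S. card (ext \<phi>)) = card (\<Union>\<phi>\<in>partial_embeddings S. ext \<phi>)"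
    using finite_partial_embeddings[OF finS] finite_extensions
    by (intro card_UN_disjoint[symmetric]) (auto simp: ext_def)
  also have "\<dots> \<le> card (partial_embeddings (insert y S))"
    using finS by (intro card_mono finite_partial_embeddings) (auto simp: ext_def)
  finally have "(\<Sum>\<phi>\<in>partial_embeddings S. real (card (ext \<phi>)))
      \<le> real (card (partial_embeddings (insert y S)))"
    by (metis of_nat_le_iff of_nat_sum)
  moreover have "(\<Sum>\<phi>\<in>partial_embeddings S. \<gamma> / 2 * real n ^ (l * nat \<bar>int (r y) - int (r x)\<bar>))
      \<le> (\<Sum>\<phi>\<in>partial_embeddings S. real (card (ext \<phi>)))"
    unfolding card_ext using card_extensions_ge_hasse_adj[OF _ S adj uniq conn] by (rule sum_mono)
  ultimately show ?thesis
    by (simp add: mult.commute)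
qed

lemma card_partial_embeddings_singleton: "1 \<le> card (partial_embeddings {v})"
proof -
  have "F0 \<in> Fam" "{F0} \<notin> \<Gamma>" "\<not> lt v v"
    using R_memD[OF root(2)] bounded strict_poset_irrefl[OF strict_poset_V root(1)]
    by (auto simp: bounded_collection_def)
  then have "(\<lambda>z. if z = v then F0 else undefined) \<in> partial_embeddings {v}"
    using root(2) by (auto simp: partial_embeddings_def)
  then show ?thesis
    using finite_partial_embeddings[of "{v}"] by (metis One_nat_def Suc_leI card_gt_0_iff empty_iff finite.emptyI finite.insertI)
qed

lemma card_partial_embeddings_ge:
  "(\<gamma> / 2) ^ (card V - 1) * (\<Prod>(x, y)\<in>hasse_diagram V lt. real n ^ (l * nat \<bar>int (r y) - int (r x)\<bar>))
    \<le> real (card (partial_embeddings V))"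
proof -
  define w where "w = (\<lambda>(x, y). real n ^ (l * nat \<bar>int (r y) - int (r x)\<bar>))"
  define P where "P S \<longleftrightarrow> (\<gamma> / 2) ^ (card S - 1) * (\<Prod>e\<in>hasse_diagram_on V lt S. w e)
    \<le> real (card (partial_embeddings S))" for S
  have "P V"
  proof (rule tree_poset_induct[OF poset(1) root(1)])
    have "hasse_diagram_on V lt {v} = {}"
      using strict_poset_irrefl[OF strict_poset_V root(1)]
      by (auto simp: hasse_diagram_on_def hasse_diagram_def hasse_edge_def)
    then show "P {v}"
      using card_partial_embeddings_singleton by (simp add: P_def)
  next
    fix S x y
    assume S: "S \<subseteq> V" "v \<in> S" "x \<in> S" "y \<in> V" "y \<notin> S" and adj: "hasse_adj V lt x y"
      and uniq: "\<forall>x'\<in>S. hasse_adj V lt x' y \<longrightarrow> x' = x"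
      and conn: "\<forall>a\<in>S. \<forall>b\<in>S. (hasse_walk V lt S)\<^sup>*\<^sup>* a b" and IH: "P S"
    define e where "e = (if lt x y then (x, y) else (y, x))"
    have fin: "finite (hasse_diagram_on V lt S)"
    proof (rule finite_subset)
      show "hasse_diagram_on V lt S \<subseteq> V \<times> V"
        by (auto simp: hasse_diagram_on_def hasse_diagram_def hasse_edge_def)
      show "finite (V \<times> V)"
        using finite_V by simp
    qed
    have "w e = real n ^ (l * nat \<bar>int (r y) - int (r x)\<bar>)"
      by (simp add: w_def e_def abs_minus_commute)
    then have prod: "(\<Prod>e\<in>hasse_diagram_on V lt (insert y S). w e)
        = real n ^ (l * nat \<bar>int (r y) - int (r x)\<bar>) * (\<Prod>e\<in>hasse_diagram_on V lt S. w e)"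
      using hasse_diagram_on_insert[OF strict_poset_V S(1,3-5) adj uniq] fin by (simp add: e_def)
    have "card (insert y S) - 1 = Suc (card S - 1)"
      using S(1,2,5) finite_V finite_subset[OF S(1)] by (cases "card S") auto
    then have "(\<gamma> / 2) ^ (card (insert y S) - 1) * (\<Prod>e\<in>hasse_diagram_on V lt (insert y S). w e)
        = \<gamma> / 2 * real n ^ (l * nat \<bar>int (r y) - int (r x)\<bar>)
          * ((\<gamma> / 2) ^ (card S - 1) * (\<Prod>e\<in>hasse_diagram_on V lt S. w e))"
      unfolding prod by (simp add: mult_ac)
    also have "\<dots> \<le> \<gamma> / 2 * real n ^ (l * nat \<bar>int (r y) - int (r x)\<bar>) * real (card (partial_embeddings S))"
      using IH small(2) by (intro mult_left_mono) (simp_all add: P_def)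
    also have "\<dots> \<le> real (card (partial_embeddings (insert y S)))"
      by (rule card_partial_embeddings_insert[OF S adj uniq conn])
    finally show "P (insert y S)" by (simp add: P_def)
  qed
  moreover have "hasse_diagram_on V lt V = hasse_diagram V lt"
    by (auto simp: hasse_diagram_on_def hasse_diagram_def hasse_edge_def)
  ultimately show ?thesis
    by (simp add: P_def w_def)
qed

lemma card_embeddings_ge:
  "(\<gamma> / 2) ^ (card V - 1) * (\<Prod>(x, y)\<in>hasse_diagram V lt. real n ^ (l * nat \<bar>int (r y) - int (r x)\<bar>))
    \<le> real (card {\<phi> \<in> inj_induced_homs V lt Fam. \<phi> ` V \<notin> \<Gamma> \<and> \<phi> v = F0})"
proof -
  have "partial_embeddings V \<subseteq> {\<phi> \<in> inj_induced_homs V lt Fam. \<phi> ` V \<notin> \<Gamma> \<and> \<phi> v = F0}"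
    by (auto simp: partial_embeddings_def inj_induced_homs_def)
  moreover have "finite {\<phi> \<in> inj_induced_homs V lt Fam. \<phi> ` V \<notin> \<Gamma> \<and> \<phi> v = F0}"
  proof (rule finite_subset)
    show "{\<phi> \<in> inj_induced_homs V lt Fam. \<phi> ` V \<notin> \<Gamma> \<and> \<phi> v = F0} \<subseteq> V \<rightarrow>\<^sub>E Fam"
      by (auto simp: inj_induced_homs_def)
    show "finite (V \<rightarrow>\<^sub>E Fam)"
      using finite_V finite_Fam by (intro finite_PiE)
  qed
  ultimately have "card (partial_embeddings V)
      \<le> card {\<phi> \<in> inj_induced_homs V lt Fam. \<phi> ` V \<notin> \<Gamma> \<and> \<phi> v = F0}"
    by (rule card_mono[rotated])
  then show ?thesis
    using card_partial_embeddings_ge by (meson of_nat_mono order_trans)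
qed

end


section \<open>Choice of the constants\<close>

text \<open>The density \<delta> satisfies (q - 1 + \<epsilon>) (1 - q \<delta>) = q - 1 + \<epsilon> / 2, so a robust set of
  window vertices survives the pruning; \<gamma> is chosen such that 3 \<gamma> n^a \<le> \<delta> / 2 n^a / (3 l q)^(l q),
  a lower bound for \<delta> / 2 times a binomial coefficient (N choose a) with N \<ge> n / 3.\<close>

definition embedding_density :: "real \<Rightarrow> nat \<Rightarrow> real" where
  "embedding_density \<epsilon> q = \<epsilon> / 2 / (real q * (real q - 1 + \<epsilon>))"

definition embedding_constant :: "real \<Rightarrow> nat \<Rightarrow> nat \<Rightarrow> real" where
  "embedding_constant \<epsilon> q l = embedding_density \<epsilon> q / (6 * (3 * real (l * q)) ^ (l * q))"

lemma embedding_density: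
  assumes "0 < \<epsilon>" "0 < q"
  shows "0 < embedding_density \<epsilon> q"
    and "real q - 1 + \<epsilon> \<le> \<mu> \<Longrightarrow> real q - 1 < \<mu> * (1 - real q * embedding_density \<epsilon> q)"
proof -
  define \<delta> where "\<delta> = embedding_density \<epsilon> q"
  have pos: "0 < real q - 1 + \<epsilon>" using assms by (simp add: Suc_le_eq)
  then show "0 < embedding_density \<epsilon> q"
    using assms by (simp add: embedding_density_def)
  have "real q * \<delta> * (real q - 1 + \<epsilon>) = (real q * (real q - 1 + \<epsilon>)) * \<delta>"
    by (simp only: mult_ac)
  also have "\<dots> = \<epsilon> / 2"
    using assms pos by (simp add: \<delta>_def embedding_density_def)
  finally have q\<delta>: "real q * \<delta> * (real q - 1 + \<epsilon>) = \<epsilon> / 2" .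
  moreover have "\<epsilon> / 2 \<le> 1 * (real q - 1 + \<epsilon>)"
    using assms by (simp add: Suc_le_eq)
  ultimately have "real q * \<delta> \<le> 1"
    using pos by (metis mult_right_le_imp_le)
  moreover assume "real q - 1 + \<epsilon> \<le> \<mu>"
  ultimately have "(real q - 1 + \<epsilon>) * (1 - real q * \<delta>) \<le> \<mu> * (1 - real q * \<delta>)"
    by (intro mult_right_mono) simp_all
  moreover have "(real q - 1 + \<epsilon>) * (1 - real q * \<delta>) = real q - 1 + \<epsilon> / 2"
    using q\<delta> by (simp add: algebra_simps)
  ultimately show "real q - 1 < \<mu> * (1 - real q * embedding_density \<epsilon> q)"
    using assms by (simp add: \<delta>_def)
qed

lemma embedding_constant_pos: "0 < \<epsilon> \<Longrightarrow> 0 < q \<Longrightarrow> 0 < embedding_constant \<epsilon> q l"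
  using embedding_density(1)[of \<epsilon> q] by (cases "l = 0") (simp_all add: embedding_constant_def)

lemma middle_width_negligible:
  "((\<lambda>n. (2 * (2 * sqrt (real n * ln (real n))) + 2) / real n) \<longlongrightarrow> 0) sequentially"
proof -
  have "((\<lambda>n. ln (real n) / real n) \<longlongrightarrow> 0) sequentially"
    using filterlim_compose[OF ln_x_over_x_tendsto_0 filterlim_real_sequentially] by simp
  then have "((\<lambda>n. 4 * sqrt (ln (real n) / real n) + 2 / real n) \<longlongrightarrow> 4 * sqrt 0 + 0) sequentially"
    by (intro tendsto_intros)
  moreover have "\<forall>\<^sub>F n in sequentially.
      4 * sqrt (ln (real n) / real n) + 2 / real n = (2 * (2 * sqrt (real n * ln (real n))) + 2) / real n"
  proof (rule eventually_sequentiallyI[of 1])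
    fix n :: nat assume "1 \<le> n"
    then have "sqrt (real n * ln (real n)) / real n = sqrt (ln (real n) / real n)"
      by (simp add: real_sqrt_divide real_sqrt_mult field_simps)
    then show "4 * sqrt (ln (real n) / real n) + 2 / real n = (2 * (2 * sqrt (real n * ln (real n))) + 2) / real n"
      by (simp add: add_divide_distrib)
  qed
  ultimately show ?thesis
    by (simp add: tendsto_cong)
qed

lemma eventually_large_n:
  fixes \<delta> \<gamma> :: real and m A :: nat
  assumes \<delta>: "0 < \<delta>" and \<gamma>: "0 < \<gamma>"
  shows "\<forall>\<^sub>F n in sequentially. 1 \<le> n \<and> 3 * (2 * sqrt (real n * ln (real n))) + 2 + real A \<le> real n / 2
    \<and> 2 * sqrt (real n * ln (real n)) \<le> real n / 6
    \<and> 4 * real m * (2 * (2 * sqrt (real n * ln (real n))) + 2) \<le> \<delta> * real n / 3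
    \<and> real m \<le> 2 * \<gamma> * real n \<and> real A \<le> real n / 3"
proof -
  define c where "c = min (1 / 6) (\<delta> / (12 * (real m + 1)))"
  have "0 < c" using \<delta> by (simp add: c_def)
  then have "\<forall>\<^sub>F n in sequentially. (2 * (2 * sqrt (real n * ln (real n))) + 2) / real n < c"
    by (rule order_tendstoD(2)[OF middle_width_negligible])
  moreover have "\<forall>\<^sub>F n in sequentially. max 1 (max (4 * real A) (real m / (2 * \<gamma>))) \<le> real n"
    by (rule eventually_sequentiallyI[of "nat \<lceil>max 1 (max (4 * real A) (real m / (2 * \<gamma>)))\<rceil>"])
      linarith
  ultimately show ?thesis
  proof eventually_elim
    case (elim n)
    define E where "E = 2 * (2 * sqrt (real n * ln (real n))) + 2"
    have n: "1 \<le> real n" "4 * real A \<le> real n" "real m \<le> 2 * \<gamma> * real n"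
      using elim(2) \<gamma> by (auto simp: field_simps)
    have W: "0 \<le> sqrt (real n * ln (real n))"
      using n(1) by simp
    have cn: "E \<le> c * real n"
      using elim(1) n(1) by (simp add: E_def divide_less_eq)
    have c: "c \<le> 1 / 6" "c \<le> \<delta> / (12 * (real m + 1))"
      unfolding c_def by (rule min.cobounded1, rule min.cobounded2)
    have "c * real n \<le> 1 / 6 * real n"
      using c(1) by (rule mult_right_mono) simp
    then have E1: "E \<le> real n / 6" using cn by simp
    have "(real m + 1) * 12 * E \<le> (real m + 1) * 12 * (c * real n)"
      using cn by (rule mult_left_mono) simp
    also have "\<dots> \<le> (real m + 1) * 12 * (\<delta> / (12 * (real m + 1)) * real n)"
      using c(2) by (intro mult_left_mono mult_right_mono) simp_all
    also have "\<dots> = \<delta> * real n"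
      by (simp add: field_simps)
    finally have E2: "(real m + 1) * 12 * E \<le> \<delta> * real n" .
    have "real m * E \<le> (real m + 1) * E"
      using W by (intro mult_right_mono) (simp_all add: E_def)
    then show ?case
      using n W E1 E2 by (simp add: E_def algebra_simps; linarith)
  qed
qed


lemma middle_layers_conditions:
  fixes n A m :: nat and \<delta> \<gamma> W :: real
  defines "T \<equiv> nat \<lceil>2 * W\<rceil> + 1"
  assumes Fam: "\<forall>F\<in>Fam. F \<subseteq> {1..n} \<and> \<bar>real (card F) - real n / 2\<bar> < W"
    and n: "0 \<le> W" "3 * W + 2 + real A \<le> real n / 2" "W \<le> real n / 6"
      "4 * real m * (2 * W + 2) \<le> \<delta> * real n / 3" "real A \<le> real n / 3"
    and \<delta>: "0 < \<delta>" and \<gamma>: "\<gamma> = \<delta> / (6 * (3 * real A) ^ A)"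
  shows "\<forall>F\<in>Fam. \<forall>G\<in>Fam. card G \<le> card F + T"
    and "\<forall>F\<in>Fam. card F + T + A \<le> n \<and> A + T \<le> card F"
    and "\<forall>F\<in>Fam. 4 * real m * real T \<le> \<delta> * real (n - card F) \<and> 4 * real m * real T \<le> \<delta> * real (card F)"
    and "\<forall>F\<in>Fam. \<forall>a\<in>{1..A}. 3 * \<gamma> * real n ^ a \<le> \<delta> / 2 * real ((n - card F) choose a)
           \<and> 3 * \<gamma> * real n ^ a \<le> \<delta> / 2 * real (card F choose a)"
proof -
  have T: "2 * W < real T" "real T \<le> 2 * W + 2"
    using n(1) unfolding T_def by linarith+
  have card: "card F \<le> n" "\<bar>real (card F) - real n / 2\<bar> < W" if "F \<in> Fam" for F
    using Fam that card_mono[of "{1..n}" F] by auto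
  have third: "real n / 3 \<le> real (n - card F)" "real n / 3 \<le> real (card F)" if "F \<in> Fam" for F
    using card[OF that] n by (auto simp: of_nat_diff)
  show "\<forall>F\<in>Fam. \<forall>G\<in>Fam. card G \<le> card F + T"
  proof (intro ballI)
    fix F G assume "F \<in> Fam" "G \<in> Fam"
    then have "real (card G) \<le> real (card F + T)"
      using card(2)[of F] card(2)[of G] T by (auto simp: abs_less_iff)
    then show "card G \<le> card F + T" by (simp only: of_nat_le_iff)
  qed
  show "\<forall>F\<in>Fam. card F + T + A \<le> n \<and> A + T \<le> card F"
  proof (intro ballI)
    fix F assume "F \<in> Fam"
    then have "real (card F + T + A) \<le> real n \<and> real (A + T) \<le> real (card F)"
      using card(2)[of F] T n(2) by (auto simp: abs_less_iff)
    then show "card F + T + A \<le> n \<and> A + T \<le> card F" by (simp only: of_nat_le_iff)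
  qed
  have "4 * real m * real T \<le> \<delta> * real n / 3"
    using T n(4) mult_left_mono[of "real T" "2 * W + 2" "4 * real m"] by simp
  moreover have "\<delta> * real n / 3 \<le> \<delta> * real (n - card F)" "\<delta> * real n / 3 \<le> \<delta> * real (card F)"
    if "F \<in> Fam" for F
    using third[OF that] \<delta> mult_left_mono[of "real n / 3" _ \<delta>] by simp_all
  ultimately show "\<forall>F\<in>Fam. 4 * real m * real T \<le> \<delta> * real (n - card F)
      \<and> 4 * real m * real T \<le> \<delta> * real (card F)"
    by (meson order_trans)
  show "\<forall>F\<in>Fam. \<forall>a\<in>{1..A}. 3 * \<gamma> * real n ^ a \<le> \<delta> / 2 * real ((n - card F) choose a)
           \<and> 3 * \<gamma> * real n ^ a \<le> \<delta> / 2 * real (card F choose a)"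
  proof (intro ballI)
    fix F a assume F: "F \<in> Fam" and a: "a \<in> {1..A}"
    have "3 * \<gamma> * real n ^ a = \<delta> / 2 * (real n ^ a / (3 * real A) ^ A)"
      by (simp add: \<gamma>)
    moreover have "a \<le> n - card F" "a \<le> card F"
      using a third[OF F] n(5) by auto
    then have "real n ^ a / (3 * real A) ^ A \<le> real ((n - card F) choose a)"
      "real n ^ a / (3 * real A) ^ A \<le> real (card F choose a)"
      using binomial_ge_power_div[of a A n] third[OF F] a by auto
    then have "\<delta> / 2 * (real n ^ a / (3 * real A) ^ A) \<le> \<delta> / 2 * real ((n - card F) choose a)"
      "\<delta> / 2 * (real n ^ a / (3 * real A) ^ A) \<le> \<delta> / 2 * real (card F choose a)"
      using \<delta> by (intro mult_left_mono; simp)+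
    ultimately show "3 * \<gamma> * real n ^ a \<le> \<delta> / 2 * real ((n - card F) choose a)
        \<and> 3 * \<gamma> * real n ^ a \<le> \<delta> / 2 * real (card F choose a)"
      by simp
  qed
qed

lemma embedding_count_eventually:
  fixes \<epsilon> :: real and q l :: nat
  assumes \<epsilon>: "0 < \<epsilon>" and q: "0 < q" and l: "0 < l" and tree: "tree_poset V lt"
  defines "\<gamma> \<equiv> embedding_constant \<epsilon> q l"
  shows "\<exists>n0. \<forall>n\<ge>n0. \<forall>v\<in>V. \<forall>r. rev_hom V lt q r \<longrightarrow>
      (\<forall>\<F> \<Gamma>. \<F> \<subseteq> middle_layers n \<and> gapped l \<F> \<and> lubell_mass n \<F> \<ge> real q - 1 + \<epsilon> \<and>
          bounded_collection n (\<gamma> / 2) l \<F> \<Gamma> \<longrightarrow>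
        (\<exists>F\<in>\<F>. real (card {\<phi> \<in> inj_induced_homs V lt \<F>. \<phi> ` V \<notin> \<Gamma> \<and> \<phi> v = F})
           \<ge> (\<gamma> / 2) ^ (card V - 1) *
              (\<Prod>(x, y)\<in>hasse_diagram V lt. real n ^ (l * nat \<bar>int (r y) - int (r x)\<bar>))))"
proof -
  define \<delta> where "\<delta> = embedding_density \<epsilon> q"
  have \<delta>: "0 < \<delta>" and \<gamma>: "0 < \<gamma>" and \<gamma>_eq: "\<gamma> = \<delta> / (6 * (3 * real (l * q)) ^ (l * q))"
    using embedding_density(1) embedding_constant_pos \<epsilon> q
    by (auto simp: \<delta>_def \<gamma>_def embedding_constant_def)
  obtain n0 where n0: "\<And>n. n \<ge> n0 \<Longrightarrow> 1 \<le> n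
      \<and> 3 * (2 * sqrt (real n * ln (real n))) + 2 + real (l * q) \<le> real n / 2
      \<and> 2 * sqrt (real n * ln (real n)) \<le> real n / 6
      \<and> 4 * real (card V) * (2 * (2 * sqrt (real n * ln (real n))) + 2) \<le> \<delta> * real n / 3
      \<and> real (card V) \<le> 2 * \<gamma> * real n \<and> real (l * q) \<le> real n / 3"
    using eventually_large_n[OF \<delta> \<gamma>, of "l * q" "card V"] by (auto simp: eventually_sequentially)
  show ?thesis
  proof (intro exI[of _ n0] allI impI ballI conjI)
    fix n v r \<F> \<Gamma>
    assume "n0 \<le> n" and v: "v \<in> V" and r: "rev_hom V lt q r"
      and \<F>: "\<F> \<subseteq> middle_layers n \<and> gapped l \<F> \<and> real q - 1 + \<epsilon> \<le> lubell_mass n \<F>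
        \<and> bounded_collection n (\<gamma> / 2) l \<F> \<Gamma>"
    define T where "T = nat \<lceil>2 * (2 * sqrt (real n * ln (real n)))\<rceil> + 1"
    have mid: "\<forall>F\<in>\<F>. F \<subseteq> {1..n} \<and> \<bar>real (card F) - real n / 2\<bar> < 2 * sqrt (real n * ln (real n))"
      using \<F> by (auto simp: middle_layers_def)
    have "0 \<le> 2 * sqrt (real n * ln (real n))"
      using n0[OF \<open>n0 \<le> n\<close>] by simp
    note cond = middle_layers_conditions[OF mid this, of "l * q" "card V" \<delta> \<gamma>, folded T_def]
    obtain R where R: "R \<subseteq> {1..q} \<times> \<F>" "robust n \<F> q \<delta> R" "windows_in n \<F> q R \<noteq> {}"
      using exists_robust[of \<F> n q \<delta>] mid \<F> embedding_density(2)[OF \<epsilon> q] q \<delta>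
      by (auto simp: \<delta>_def)
    then obtain x0 where "x0 \<in> windows_in n \<F> q R" by blast
    then have F0: "(r v, window_vertex n \<F> q x0 (r v)) \<in> R"
      using r v by (auto simp: windows_in_def rev_hom_def)
    interpret embedding_setting n q l T \<F> \<delta> \<gamma> V lt r \<Gamma> R v "window_vertex n \<F> q x0 (r v)"
      using cond n0[OF \<open>n0 \<le> n\<close>] \<F> mid \<delta> \<gamma>_eq \<gamma> l tree r R v F0
      by unfold_locales (auto simp: T_def)
    show "\<exists>F\<in>\<F>. (\<gamma> / 2) ^ (card V - 1) *
        (\<Prod>(x, y)\<in>hasse_diagram V lt. real n ^ (l * nat \<bar>int (r y) - int (r x)\<bar>))
        \<le> real (card {\<phi> \<in> inj_induced_homs V lt \<F>. \<phi> ` V \<notin> \<Gamma> \<and> \<phi> v = F})"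
      using card_embeddings_ge R_memD[OF F0] by blast
  qed
qed

theorem theorem5p2:
  fixes \<epsilon> :: real and q l :: nat
  assumes "\<epsilon> > 0" and "q > 0" and "l > 0"
  shows "\<exists>\<gamma>>0. \<forall>V lt k. tree_poset V lt \<and> poset_height V lt = k \<and> q \<ge> k \<longrightarrow>
    (\<exists>n0. \<forall>n\<ge>n0. \<forall>v\<in>V. \<forall>r. rev_hom V lt q r \<longrightarrow>
      (\<forall>\<F> \<Gamma>. \<F> \<subseteq> middle_layers n \<and> gapped l \<F> \<and>
          lubell_mass n \<F> \<ge> real q - 1 + \<epsilon> \<and>
          bounded_collection n (\<gamma> / 2) l \<F> \<Gamma> \<longrightarrow>
        (\<exists>F\<in>\<F>. real (card {\<phi> \<in> inj_induced_homs V lt \<F>. \<phi> ` V \<notin> \<Gamma> \<and> \<phi> v = F})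
           \<ge> (\<gamma> / 2) ^ (card V - 1) *
              (\<Prod>(x, y)\<in>hasse_diagram V lt.
                 real n ^ (l * nat \<bar>int (r y) - int (r x)\<bar>)))))"
  using embedding_constant_pos[OF assms(1,2)] embedding_count_eventually[OF assms]
  by (intro exI[of _ "embedding_constant \<epsilon> q l"]) blast

end
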